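(* Let ${\tt G}$ be a digraph, $R$ a commutative unital ring and $A$ a unital associative $R$-algebra. Then the cochain complex $(C^*_\mu({\tt G};A,A),d^* )$ does not depend, up to isomorphism of cochain complexes, on the choice of the total order on $V({\tt G})$ used to define it.
   Context: A digraph ${\tt G}=(V,E)$ has finite $V$ and $E\subseteq(V\times V)\setminus\{(v,v)\}$. A multipath is a spanning subgraph (all vertices, subset of edges) each of whose components (of the underlying undirected graph) is an isolated vertex or a simple directed path. $P({\tt G})$ is the set of multipaths ordered by inclusion of edge sets; ${\tt H}\prec{\tt H}\cup e$ denotes adding one edge $e$. Given a total order on $V({\tt G})$, order the components $c_0<\dots<c_k$ of a multipath by minimal vertex and let $s,t$ be the indices of the components containing the source and target of $e$. $\mathcal F_{A,A}({\tt H})=A^{\otimes_R(k+1)}$; for ${\tt H}\prec{\tt H}\cup e$ the merged component is placed at position $\min(s,t)$ and the map replaces $a_s,a_t$ by $a_sa_t$ there. Sign $\sigma({\tt H},{\tt H}\cup e)=t+1$ if $t>s$, $=s$ if $s>t$ (mod 2). $C^n_\mu({\tt G};A,A)=\bigoplus_{{\tt H}\in P({\tt G}),\#E({\tt H})=n}\mathcal F_{A,A}({\tt H})$, $d=\sum_{{\tt H}\prec{\tt H}'}(-1)^{\sigma({\tt H},{\tt H}')}\mathcal F_{A,A}({\tt H}\prec{\tt H}')$. *)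

theory Defs
  imports Main
begin

definition digraph :: "'v set \<Rightarrow> ('v \<times> 'v) set \<Rightarrow> bool" where
  "digraph V E \<longleftrightarrow> finite V \<and> E \<subseteq> V \<times> V \<and> (\<forall>v. (v, v) \<notin> E)"

definition components :: "'v set \<Rightarrow> ('v \<times> 'v) set \<Rightarrow> 'v set set" where
  "components V H = (\<lambda>v. {w \<in> V. (v, w) \<in> (H \<union> H\<inverse>)\<^sup>*}) ` V"

text \<open>A multipath: every component is an isolated vertex (xs = [v]) or a simple directed path.\<close>
definition is_multipath :: "'v set \<Rightarrow> ('v \<times> 'v) set \<Rightarrow> ('v \<times> 'v) set \<Rightarrow> bool" where
  "is_multipath V E H \<longleftrightarrow> H \<subseteq> E \<and>
     (\<forall>C \<in> components V H. \<exists>xs. distinct xs \<and> set xs = C \<and>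
        {e \<in> H. fst e \<in> C} = set (zip xs (tl xs)))"

definition minv :: "('v \<times> 'v) set \<Rightarrow> 'v set \<Rightarrow> 'v" where
  "minv le C = (THE w. w \<in> C \<and> (\<forall>u \<in> C. (w, u) \<in> le))"

definition comp_list :: "('v \<times> 'v) set \<Rightarrow> 'v set \<Rightarrow> ('v \<times> 'v) set \<Rightarrow> 'v set list" where
  "comp_list le V H = (THE cs. set cs = components V H \<and> distinct cs \<and>
       sorted_wrt (\<lambda>C D. (minv le C, minv le D) \<in> le) cs)"

definition comp_idx :: "('v \<times> 'v) set \<Rightarrow> 'v set \<Rightarrow> ('v \<times> 'v) set \<Rightarrow> 'v \<Rightarrow> nat" where
  "comp_idx le V H v = (THE i. i < length (comp_list le V H) \<and> v \<in> comp_list le V H ! i)"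

definition merge_list :: "nat \<Rightarrow> nat \<Rightarrow> 'a::times list \<Rightarrow> 'a list" where
  "merge_list s t xs = (let m = min s t; M = max s t; ys = xs[m := xs ! s * xs ! t]
                        in take M ys @ drop (Suc M) ys)"

definition sigma :: "nat \<Rightarrow> nat \<Rightarrow> nat" where
  "sigma s t = (if t > s then t + 1 else s)"

definition edge_map :: "('v \<times> 'v) set \<Rightarrow> 'v set \<Rightarrow> ('v \<times> 'v) set \<Rightarrow> 'v \<times> 'v \<Rightarrow> 'a::times list \<Rightarrow> 'a list" where
  "edge_map le V H e as = merge_list (comp_idx le V H (fst e)) (comp_idx le V H (snd e)) as"

definition edge_sign :: "('v \<times> 'v) set \<Rightarrow> 'v set \<Rightarrow> ('v \<times> 'v) set \<Rightarrow> 'v \<times> 'v \<Rightarrow> 'r::{comm_ring,monoid_mult}" where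
  "edge_sign le V H e = (- 1) ^ sigma (comp_idx le V H (fst e)) (comp_idx le V H (snd e))"

definition is_algebra :: "('r::{comm_ring,monoid_mult} \<Rightarrow> 'a::{ring,monoid_mult} \<Rightarrow> 'a) \<Rightarrow> bool" where
  "is_algebra sm \<longleftrightarrow>
     (\<forall>r a b. sm r (a + b) = sm r a + sm r b) \<and>
     (\<forall>r s a. sm (r + s) a = sm r a + sm s a) \<and>
     (\<forall>r s a. sm (r * s) a = sm r (sm s a)) \<and>
     (\<forall>a. sm 1 a = a) \<and>
     (\<forall>r a b. sm r (a * b) = sm r a * b \<and> sm r (a * b) = a * sm r b)"

text \<open>Generators of degree n: a multipath H with n edges and a list (a_0,...,a_k) with
  k+1 = number of components of H.  The free R-module on these generators is modelled by
  finitely supported functions; the tensor power is its quotient by multilinearity relations.\<close>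

definition gen_ok :: "'v set \<Rightarrow> ('v \<times> 'v) set \<Rightarrow> nat \<Rightarrow> ('v \<times> 'v) set \<times> 'a list \<Rightarrow> bool" where
  "gen_ok V E n x \<longleftrightarrow> is_multipath V E (fst x) \<and> card (fst x) = n \<and>
      length (snd x) = card (components V (fst x))"

definition Fr :: "'v set \<Rightarrow> ('v \<times> 'v) set \<Rightarrow> nat \<Rightarrow>
    (('v \<times> 'v) set \<times> 'a list \<Rightarrow> 'r::{comm_ring,monoid_mult}) set" where
  "Fr V E n = {f. finite {x. f x \<noteq> 0} \<and> (\<forall>x. f x \<noteq> 0 \<longrightarrow> gen_ok V E n x)}"

definition delta :: "'x \<Rightarrow> 'x \<Rightarrow> 'r::{comm_ring,monoid_mult}" where
  "delta x = (\<lambda>y. if y = x then 1 else 0)"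

inductive_set Nrel :: "('r::{comm_ring,monoid_mult} \<Rightarrow> 'a::{ring,monoid_mult} \<Rightarrow> 'a) \<Rightarrow> 'v set \<Rightarrow>
    ('v \<times> 'v) set \<Rightarrow> nat \<Rightarrow> (('v \<times> 'v) set \<times> 'a list \<Rightarrow> 'r) set"
  for sm V E n where
  gen_add: "gen_ok V E n (H, as) \<Longrightarrow> i < length as \<Longrightarrow>
     (\<lambda>y. delta (H, as[i := a + b]) y - delta (H, as[i := a]) y - delta (H, as[i := b]) y)
       \<in> Nrel sm V E n"
| gen_smult: "gen_ok V E n (H, as) \<Longrightarrow> i < length as \<Longrightarrow>
     (\<lambda>y. delta (H, as[i := sm r a]) y - r * delta (H, as[i := a]) y) \<in> Nrel sm V E n"
| zero: "(\<lambda>y. 0) \<in> Nrel sm V E n"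
| add: "f \<in> Nrel sm V E n \<Longrightarrow> g \<in> Nrel sm V E n \<Longrightarrow> (\<lambda>y. f y + g y) \<in> Nrel sm V E n"
| smult: "f \<in> Nrel sm V E n \<Longrightarrow> (\<lambda>y. r * f y) \<in> Nrel sm V E n"

definition dfree :: "('v \<times> 'v) set \<Rightarrow> 'v set \<Rightarrow> ('v \<times> 'v) set \<Rightarrow>
    (('v \<times> 'v) set \<times> 'a::{ring,monoid_mult} list \<Rightarrow> 'r::{comm_ring,monoid_mult}) \<Rightarrow>
    (('v \<times> 'v) set \<times> 'a list \<Rightarrow> 'r)" where
  "dfree le V E f = (\<lambda>(H', bs).
     \<Sum>(H, as, e) \<in> {(H, as, e). f (H, as) \<noteq> 0 \<and> e \<in> E \<and> e \<notin> H \<and>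
                         is_multipath V E (insert e H) \<and> H' = insert e H \<and>
                         bs = edge_map le V H e as}.
        edge_sign le V H e * f (H, as))"

definition cls :: "('r::{comm_ring,monoid_mult} \<Rightarrow> 'a::{ring,monoid_mult} \<Rightarrow> 'a) \<Rightarrow> 'v set \<Rightarrow>
    ('v \<times> 'v) set \<Rightarrow> nat \<Rightarrow> (('v \<times> 'v) set \<times> 'a list \<Rightarrow> 'r) \<Rightarrow> (('v \<times> 'v) set \<times> 'a list \<Rightarrow> 'r) set" where
  "cls sm V E n f = {g \<in> Fr V E n. (\<lambda>y. f y - g y) \<in> Nrel sm V E n}"

text \<open>C^n = carrier of degree-n cochains (set of cosets).\<close>
definition Cq :: "('r::{comm_ring,monoid_mult} \<Rightarrow> 'a::{ring,monoid_mult} \<Rightarrow> 'a) \<Rightarrow> 'v set \<Rightarrow>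
    ('v \<times> 'v) set \<Rightarrow> nat \<Rightarrow> (('v \<times> 'v) set \<times> 'a list \<Rightarrow> 'r) set set" where
  "Cq sm V E n = cls sm V E n ` Fr V E n"

definition rep :: "'x set \<Rightarrow> 'x" where
  "rep X = (SOME f. f \<in> X)"

definition qadd where
  "qadd sm V E n X Y = cls sm V E n (\<lambda>y. rep X y + rep Y y)"

definition qsmult where
  "qsmult sm V E n r X = cls sm V E n (\<lambda>y. r * rep X y)"

definition qd where
  "qd sm le V E n X = cls sm V E (Suc n) (dfree le V E (rep X))"

definition cochain_iso ::
  "('r::{comm_ring,monoid_mult} \<Rightarrow> 'a::{ring,monoid_mult} \<Rightarrow> 'a) \<Rightarrow> 'v set \<Rightarrow> ('v \<times> 'v) set \<Rightarrow>
   ('v \<times> 'v) set \<Rightarrow> ('v \<times> 'v) set \<Rightarrow> bool" where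
  "cochain_iso sm V E le1 le2 \<longleftrightarrow>
    (\<exists>\<phi>. \<forall>n. bij_betw (\<phi> n) (Cq sm V E n) (Cq sm V E n) \<and>
       (\<forall>X \<in> Cq sm V E n. \<forall>Y \<in> Cq sm V E n.
          \<phi> n (qadd sm V E n X Y) = qadd sm V E n (\<phi> n X) (\<phi> n Y)) \<and>
       (\<forall>r. \<forall>X \<in> Cq sm V E n. \<phi> n (qsmult sm V E n r X) = qsmult sm V E n r (\<phi> n X)) \<and>
       (\<forall>X \<in> Cq sm V E n. \<phi> (Suc n) (qd sm le1 V E n X) = qd sm le2 V E n (\<phi> n X)))"

end

theory Submission
  imports Defs
begin

text \<open>A multipath \<open>H\<close> has the same components for both orders; the orders only decide in which
  order the tensor factors \<open>a\<^sub>0 \<otimes> \<dots> \<otimes> a\<^sub>k\<close>, one per component, are listed. The isomorphism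
  relists the factors of every generator and multiplies by \<open>\<epsilon>(H) = (-1)^N(H)\<close>, where \<open>N(H)\<close>
  counts the pairs of components that the two orders compare differently. Relisting respects the
  multilinearity relations and is undone by relisting back, since \<open>\<epsilon>(H)\<^sup>2 = 1\<close>.

  It commutes with \<open>d\<close> because adding an edge \<open>e\<close> merges the same two components into the same
  product \<open>a\<^sub>s a\<^sub>t\<close> whatever the order, so only the signs need comparing. Modulo 2, \<open>\<sigma>\<close> counts
  the components below either merged component, plus one if the target component comes first,
  while \<open>N(H)\<close> and \<open>N(H \<union> e)\<close> differ by the inversions involving the merged components.
  Comparing these counts for both orders gives \<open>\<epsilon>(H) (-1)^\<sigma>\<^sub>2 = \<epsilon>(H \<union> e) (-1)^\<sigma>\<^sub>1\<close>.\<close>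


definition position :: "'x list \<Rightarrow> 'x \<Rightarrow> nat" where
  "position xs x = (THE i. i < length xs \<and> xs ! i = x)"

lemma position_nth [simp]: "distinct xs \<Longrightarrow> i < length xs \<Longrightarrow> position xs (xs ! i) = i"
  unfolding position_def by (rule the_equality) (auto simp: nth_eq_iff_index_eq)

lemma position_less_length: "distinct xs \<Longrightarrow> x \<in> set xs \<Longrightarrow> position xs x < length xs"
  by (metis in_set_conv_nth position_nth)

lemma nth_position [simp]: "distinct xs \<Longrightarrow> x \<in> set xs \<Longrightarrow> xs ! position xs x = x"
  by (metis in_set_conv_nth position_nth)

lemma map_nth_position: "distinct ks \<Longrightarrow> length xs = length ks \<Longrightarrow> map (\<lambda>k. xs ! position ks k) ks = xs"
  by (rule nth_equalityI) simp_all

lemma map_fun_upd_position: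
  assumes "distinct ks" "k \<in> set ks"
  shows "map (g(k := v)) ks = (map g ks)[position ks k := v]"
proof (rule nth_equalityI)
  fix i assume i: "i < length (map (g(k := v)) ks)"
  then have "ks ! i = k \<longleftrightarrow> i = position ks k"
    using assms position_nth[OF assms(1), of i] by auto
  then show "map (g(k := v)) ks ! i = (map g ks)[position ks k := v] ! i"
    using i by (simp add: nth_list_update)
qed simp

text \<open>A list \<open>xs\<close> whose entries are labelled by the distinct keys \<open>ks\<close>, relabelled along \<open>ls\<close>.\<close>

definition reorder :: "'k list \<Rightarrow> 'k list \<Rightarrow> 'a list \<Rightarrow> 'a list" where
  "reorder ks ls xs = map (\<lambda>k. xs ! position ks k) ls"

lemma length_reorder [simp]: "length (reorder ks ls xs) = length ls"
  by (simp add: reorder_def)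

lemma reorder_map:
  assumes "distinct ks" "set ls \<subseteq> set ks"
  shows "reorder ks ls (map g ks) = map g ls"
  unfolding reorder_def
proof (rule map_cong)
  fix k assume "k \<in> set ls"
  then show "map g ks ! position ks k = g k"
    using assms position_less_length[OF assms(1)] by auto
qed simp

lemma reorder_reorder:
  assumes "distinct ks" "distinct ls" "set ks = set ls" "length xs = length ks"
  shows "reorder ls ks (reorder ks ls xs) = xs"
  using reorder_map[of ls ks "\<lambda>k. xs ! position ks k"] map_nth_position[of ks xs] assms
  by (simp add: reorder_def)

lemma reorder_update:
  assumes "distinct ks" "distinct ls" "set ks = set ls" "length xs = length ks" "i < length ks"
  shows "reorder ks ls (xs[i := v]) = (reorder ks ls xs)[position ls (ks ! i) := v]"
proof -
  define g where "g k = xs ! position ks k" for k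
  have xs: "xs = map g ks"
    unfolding g_def using map_nth_position[OF assms(1,4)] by simp
  have "xs[i := v] = map (g(ks ! i := v)) ks"
    by (simp add: xs map_fun_upd_position[OF assms(1) nth_mem[OF assms(5)]] assms(1,5))
  then show ?thesis
    using xs assms nth_mem[OF assms(5)] map_fun_upd_position[OF assms(2), of "ks ! i" g v]
    by (simp add: reorder_map)
qed

definition merge_at :: "nat \<Rightarrow> nat \<Rightarrow> 'x \<Rightarrow> 'x list \<Rightarrow> 'x list" where
  "merge_at s t u xs = (let ys = xs[min s t := u] in take (max s t) ys @ drop (Suc (max s t)) ys)"

lemma merge_list_eq_merge_at: "merge_list s t xs = merge_at s t (xs ! s * xs ! t) xs"
  by (simp add: merge_list_def merge_at_def Let_def)

lemma map_merge_at: "map g (merge_at s t u xs) = merge_at s t (g u) (map g xs)"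
  by (simp add: merge_at_def Let_def take_map drop_map flip: map_update)

lemma set_delete_nth:
  assumes "distinct ys" "i < length ys"
  shows "set (take i ys @ drop (Suc i) ys) = set ys - {ys ! i}"
proof -
  have split: "ys = take i ys @ ys ! i # drop (Suc i) ys"
    using assms(2) by (rule id_take_nth_drop)
  have "distinct (take i ys @ ys ! i # drop (Suc i) ys)"
    using assms(1) split by simp
  then show ?thesis
    by (subst (3) split) auto
qed

lemma distinct_delete_nth: "distinct ys \<Longrightarrow> distinct (take i ys @ drop (Suc i) ys)"
  by (cases "i < length ys") (auto simp: set_take_disj_set_drop_if_distinct)

lemma sorted_wrt_delete_nth:
  "sorted_wrt r ys \<Longrightarrow> i < length ys \<Longrightarrow> sorted_wrt r (take i ys @ drop (Suc i) ys)"
  by (subst (asm) id_take_nth_drop[of i ys]) (auto simp: sorted_wrt_append)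

lemma sorted_wrt_exists:
  assumes "finite S" "totalp_on S r" "transp_on S r"
  shows "\<exists>xs. set xs = S \<and> distinct xs \<and> sorted_wrt r xs"
  using assms
proof (induction S rule: finite_induct)
  case empty
  show ?case by simp
next
  case (insert x S)
  obtain xs where xs: "set xs = S" "distinct xs" "sorted_wrt r xs"
    using insert.IH totalp_on_subset[OF insert.prems(1)] transp_on_subset[OF insert.prems(2)]
    by blast
  let ?ys = "filter (\<lambda>y. r y x) xs @ x # filter (\<lambda>y. \<not> r y x) xs"
  have above: "r x y" if "y \<in> S" "\<not> r y x" for y
    using insert.prems(1) insert.hyps(2) that by (auto simp: totalp_on_def)
  have "r y z" if "y \<in> S" "r y x" "z \<in> S" "\<not> r z x" for y z
    using transp_onD[OF insert.prems(2)] above[OF that(3,4)] that(1-3) by blast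
  then have "sorted_wrt r ?ys"
    using xs above by (simp add: sorted_wrt_append sorted_wrt_filter)
  moreover have "distinct ?ys" "set ?ys = insert x S"
    using xs insert.hyps(2) by auto
  ultimately show ?case
    by (intro exI[of _ ?ys] conjI)
qed

lemma sorted_wrt_distinct_unique:
  assumes "sorted_wrt r xs" "sorted_wrt r ys" "distinct xs" "distinct ys" "set xs = set ys"
    "antisymp_on (set xs) r"
  shows "xs = ys"
  using assms
proof (induction xs arbitrary: ys)
  case Nil
  then show ?case by simp
next
  case (Cons x xs)
  then obtain y ys' where ys: "ys = y # ys'"
    by (cases ys) auto
  have xy: "x = y"
  proof (rule ccontr)
    assume "x \<noteq> y"
    then have "r x y" "r y x"
      using Cons.prems(1,2,5) ys by auto
    then show False
      using Cons.prems(5,6) \<open>x \<noteq> y\<close> ys by (auto simp: antisymp_on_def)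
  qed
  have "set xs = set ys'"
    using Cons.prems(3-5) ys xy by auto
  then have "xs = ys'"
    using Cons.IH[of ys'] Cons.prems ys antisymp_on_subset[OF Cons.prems(6)] by auto
  then show ?case
    using ys xy by simp
qed

lemma card_sorted_wrt_before:
  assumes "sorted_wrt r xs" "distinct xs" "antisymp_on (set xs) r" "i < length xs"
  shows "card {y \<in> set xs. r y (xs ! i) \<and> y \<noteq> xs ! i} = i"
proof -
  have "{y \<in> set xs. r y (xs ! i) \<and> y \<noteq> xs ! i} = set (take i xs)"
  proof (rule set_eqI, rule iffI)
    fix y assume "y \<in> {y \<in> set xs. r y (xs ! i) \<and> y \<noteq> xs ! i}"
    then have "y \<in> set xs" "r y (xs ! i)" "y \<noteq> xs ! i"
      by auto
    then obtain j where j: "j < length xs" "y = xs ! j"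
      by (auto simp: in_set_conv_nth)
    have "\<not> i < j"
      using sorted_wrt_nth_less[OF assms(1) _ j(1)] assms(3,4) j \<open>r y (xs ! i)\<close> \<open>y \<noteq> xs ! i\<close>
      by (metis antisymp_onD nth_mem)
    then have "j < i"
      using \<open>y \<noteq> xs ! i\<close> j(2) by (cases "j = i") auto
    then show "y \<in> set (take i xs)"
      using j by (auto simp: in_set_conv_nth intro!: exI[of _ j])
  next
    fix y assume "y \<in> set (take i xs)"
    then obtain j where j: "j < i" "y = xs ! j"
      using assms(4) by (auto simp: in_set_conv_nth)
    then show "y \<in> {y \<in> set xs. r y (xs ! i) \<and> y \<noteq> xs ! i}"
      using assms(2,4) sorted_wrt_nth_less[OF assms(1) j(1) assms(4)]
      by (simp add: nth_eq_iff_index_eq)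
  qed
  then show ?thesis
    using assms(2,4) by (simp add: distinct_card)
qed


section \<open>Inversions between two orders\<close>

definition inversions :: "('x \<Rightarrow> 'x \<Rightarrow> bool) \<Rightarrow> ('x \<Rightarrow> 'x \<Rightarrow> bool) \<Rightarrow> 'x set \<Rightarrow> nat" where
  "inversions l1 l2 S = (\<Sum>x\<in>S. \<Sum>y\<in>S. of_bool (l1 x y \<and> l2 y x))"

definition rank :: "('x \<Rightarrow> 'x \<Rightarrow> bool) \<Rightarrow> 'x set \<Rightarrow> 'x \<Rightarrow> nat" where
  "rank l S x = card {y \<in> S. l y x}"

definition strict_total_on :: "'x set \<Rightarrow> ('x \<Rightarrow> 'x \<Rightarrow> bool) \<Rightarrow> bool" where
  "strict_total_on S l \<longleftrightarrow> (\<forall>x\<in>S. \<forall>y\<in>S. l x y \<longleftrightarrow> x \<noteq> y \<and> \<not> l y x)"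

lemma strict_total_onD: "strict_total_on S l \<Longrightarrow> x \<in> S \<Longrightarrow> y \<in> S \<Longrightarrow> l x y \<longleftrightarrow> x \<noteq> y \<and> \<not> l y x"
  unfolding strict_total_on_def by blast

lemma inversions_swap: "inversions l2 l1 S = inversions l1 l2 S"
  unfolding inversions_def by (subst sum.swap) (simp add: conj_commute)

lemma inversions_insert:
  assumes "finite S" "x \<notin> S" "\<not> l1 x x"
  shows "inversions l1 l2 (insert x S) =
    inversions l1 l2 S + (\<Sum>y\<in>S. of_bool (l1 x y \<and> l2 y x) + of_bool (l1 y x \<and> l2 x y))"
  using assms by (simp add: inversions_def sum.distrib ac_simps del: sum_of_bool_eq)

text \<open>Two orders on \<open>insert p (insert q W)\<close> and on \<open>insert u W\<close>, where \<open>u\<close> replaces \<open>p\<close> and \<open>q\<close>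
  and sits at the place of the smaller of the two.\<close>

locale merge_order =
  fixes l :: "'x \<Rightarrow> 'x \<Rightarrow> bool" and W :: "'x set" and p q u :: 'x
  assumes finite: "finite W" and fresh: "p \<notin> W" "q \<notin> W" "u \<notin> W" "p \<noteq> q"
    and total_before: "strict_total_on (insert p (insert q W)) l"
    and trans_before: "transp_on (insert p (insert q W)) l"
    and total_after: "strict_total_on (insert u W) l"
    and below_merged: "\<And>x. x \<in> W \<Longrightarrow> l x u \<longleftrightarrow> l x p \<and> l x q"
begin

lemmas asym_before = strict_total_onD[OF total_before]
lemmas asym_after = strict_total_onD[OF total_after]

lemma asym_iff:
  assumes "x \<in> W"
  shows "l p x \<longleftrightarrow> \<not> l x p" "l q x \<longleftrightarrow> \<not> l x q" "l u x \<longleftrightarrow> \<not> (l x p \<and> l x q)"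
  using assms fresh asym_before[of p x] asym_before[of q x] asym_after[of u x] below_merged[OF
    assms]
  by auto

lemma asym_iff_pq: "l q p \<longleftrightarrow> \<not> l p q"
  using fresh(4) asym_before[of q p] by simp

lemma sigma_rank_parity:
  defines "S \<equiv> insert p (insert q W)"
  shows "even (sigma (rank l S p) (rank l S q) + card {x \<in> W. l x p \<or> l x q} + of_bool (l q p))"
proof -
  have irrefl: "\<not> l p p" "\<not> l q q"
    using asym_before[of p p] asym_before[of q q] by simp_all
  have "{x \<in> S. l x p} = (if l q p then insert q {x \<in> W. l x p} else {x \<in> W. l x p})"
    using irrefl unfolding S_def by auto
  then have rank_p: "rank l S p = card {x \<in> W. l x p} + of_bool (l q p)"
    using finite fresh(2) by (simp add: rank_def)
  have "{x \<in> S. l x q} = (if l p q then insert p {x \<in> W. l x q} else {x \<in> W. l x q})"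
    using irrefl unfolding S_def by auto
  then have rank_q: "rank l S q = card {x \<in> W. l x q} + of_bool (l p q)"
    using finite fresh(1) by (simp add: rank_def)
  show ?thesis
  proof (cases "l p q")
    case True
    then have "\<not> l q p"
      using asym_before[of p q] by simp
    have "l x q" if "x \<in> W" "l x p" for x
      using transp_onD[OF trans_before, of x p q] that True by simp
    then have sub: "{x \<in> W. l x p} \<subseteq> {x \<in> W. l x q}"
      by blast
    then have "card {x \<in> W. l x p} \<le> card {x \<in> W. l x q}"
      using finite by (intro card_mono) simp_all
    then have "rank l S p < rank l S q"
      using rank_p rank_q True \<open>\<not> l q p\<close> by simp
    moreover have "{x \<in> W. l x p \<or> l x q} = {x \<in> W. l x q}"
      using sub by blast
    ultimately show ?thesis
      using rank_q True \<open>\<not> l q p\<close> by (simp add: sigma_def)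
  next
    case False
    then have "l q p"
      using asym_before[of p q] fresh(4) by simp
    have "l x p" if "x \<in> W" "l x q" for x
      using transp_onD[OF trans_before, of x q p] that \<open>l q p\<close> by simp
    then have sub: "{x \<in> W. l x q} \<subseteq> {x \<in> W. l x p}"
      by blast
    then have "card {x \<in> W. l x q} \<le> card {x \<in> W. l x p}"
      using finite by (intro card_mono) simp_all
    then have "\<not> rank l S p < rank l S q"
      using rank_p rank_q False \<open>l q p\<close> by simp
    moreover have "{x \<in> W. l x p \<or> l x q} = {x \<in> W. l x p}"
      using sub by blast
    ultimately show ?thesis
      using rank_p \<open>l q p\<close> by (simp add: sigma_def)
  qed
qed

end

text \<open>Modulo 2, the pair \<open>{x, c}\<close> is inverted iff \<open>l1 x c + l2 x c\<close> is odd; for \<open>c = u\<close> this sum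
  is determined by the sums for \<open>p\<close> and \<open>q\<close>, and the remaining terms are the parities of
  \<open>sigma_rank_parity\<close>.\<close>

lemma inversions_sigma_parity:
  assumes "merge_order l1 W p q u" "merge_order l2 W p q u"
  defines "S \<equiv> insert p (insert q W)"
  shows "even (inversions l1 l2 S + sigma (rank l1 S p) (rank l1 S q)
    + inversions l1 l2 (insert u W) + sigma (rank l2 S p) (rank l2 S q))"
proof -
  interpret m1: merge_order l1 W p q u by fact
  interpret m2: merge_order l2 W p q u by fact
  define I where "I x y = (of_bool (l1 x y \<and> l2 y x) + of_bool (l1 y x \<and> l2 x y) :: nat)" for x y
  define b1 where "b1 x = (of_bool (l1 x p \<or> l1 x q) :: nat)" for x
  define b2 where "b2 x = (of_bool (l2 x p \<or> l2 x q) :: nat)" for x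
  have card_b: "card {x \<in> W. l1 x p \<or> l1 x q} = sum b1 W" "card {x \<in> W. l2 x p \<or> l2 x q} = sum b2 W"
    unfolding b1_def b2_def card_eq_sum sum.inter_filter[OF m1.finite] of_bool_def
    by (rule refl)+
  have "even (I p x + I q x + I u x + b1 x + b2 x)" if x: "x \<in> W" for x
    unfolding I_def b1_def b2_def m1.asym_iff[OF x] m2.asym_iff[OF x] m1.below_merged[OF x]
      m2.below_merged[OF x]
    by (cases "l1 x p"; cases "l1 x q"; cases "l2 x p"; cases "l2 x q") simp_all
  then have "even (\<Sum>x\<in>W. I p x + I q x + I u x + b1 x + b2 x)"
    by (rule dvd_sum)
  then have even_W: "even (sum (I p) W + sum (I q) W + sum (I u) W + sum b1 W + sum b2 W)"
    by (simp only: sum.distrib)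
  have even_pq: "even (I p q + of_bool (l1 q p) + of_bool (l2 q p))"
    unfolding I_def m1.asym_iff_pq m2.asym_iff_pq by (cases "l1 p q"; cases "l2 p q") simp_all
  have even_sigma: "even (sigma (rank l1 S p) (rank l1 S q) + sum b1 W + of_bool (l1 q p))"
    "even (sigma (rank l2 S p) (rank l2 S q) + sum b2 W + of_bool (l2 q p))"
    unfolding S_def card_b[symmetric] by (rule m1.sigma_rank_parity m2.sigma_rank_parity)+
  have irrefl: "\<not> l1 p p" "\<not> l1 q q" "\<not> l1 u u"
    using m1.asym_before[of p p] m1.asym_before[of q q] m1.asym_after[of u u] by simp_all
  have "inversions l1 l2 S = inversions l1 l2 W + sum (I q) W + (I p q + sum (I p) W)"
    using m1.finite m1.fresh irrefl unfolding S_def I_def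
    by (simp only: inversions_insert finite_insert insert_iff sum.insert simp_thms)
  moreover have "inversions l1 l2 (insert u W) = inversions l1 l2 W + sum (I u) W"
    unfolding I_def by (rule inversions_insert[of W u l1 l2, OF m1.finite m1.fresh(3) irrefl(3)])
  ultimately show ?thesis
    using even_W even_pq even_sigma by presburger
qed

lemma neg_one_power_eq_if_even_add:
  assumes "even (m + n)"
  shows "(- 1 :: 'r::{comm_ring,monoid_mult}) ^ m = (- 1) ^ n"
proof -
  have square: "(- 1 :: 'r) ^ (2 * k) = 1" for k
    by (simp add: power_mult power2_eq_square)
  obtain k where k: "m + n = 2 * k"
    using assms by (rule evenE)
  have mn: "(- 1 :: 'r) ^ m * (- 1) ^ n = 1"
    by (simp add: power_add[symmetric] k square)
  have nn: "(- 1 :: 'r) ^ n * (- 1) ^ n = 1"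
    using square[of n] by (simp add: power_add[symmetric] mult_2)
  have "(- 1 :: 'r) ^ m = (- 1) ^ m * ((- 1) ^ n * (- 1) ^ n)"
    by (simp add: nn)
  also have "\<dots> = ((- 1) ^ m * (- 1) ^ n) * (- 1) ^ n"
    by (simp only: mult.assoc)
  also have "\<dots> = (- 1) ^ n"
    by (simp add: mn)
  finally show ?thesis .
qed


definition vcomp :: "'v set \<Rightarrow> ('v \<times> 'v) set \<Rightarrow> 'v \<Rightarrow> 'v set" where
  "vcomp V H v = {w \<in> V. (v, w) \<in> (H \<union> H\<inverse>)\<^sup>*}"

lemma components_eq_vcomp_image: "components V H = vcomp V H ` V"
  unfolding components_def vcomp_def ..

lemma rtrancl_Un_converse_sym: "(v, w) \<in> (H \<union> H\<inverse>)\<^sup>* \<Longrightarrow> (w, v) \<in> (H \<union> H\<inverse>)\<^sup>*"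
  using rtrancl_converseI[of v w "H \<union> H\<inverse>"] by (simp add: converse_Un sup_commute)

lemma vcomp_self: "v \<in> V \<Longrightarrow> v \<in> vcomp V H v"
  by (simp add: vcomp_def)

lemma vcomp_subset: "vcomp V H v \<subseteq> V"
  by (auto simp: vcomp_def)

lemma vcomp_eq:
  assumes "w \<in> vcomp V H v"
  shows "vcomp V H w = vcomp V H v"
proof -
  have "(v, w) \<in> (H \<union> H\<inverse>)\<^sup>*" "(w, v) \<in> (H \<union> H\<inverse>)\<^sup>*"
    using assms rtrancl_Un_converse_sym by (auto simp: vcomp_def)
  then show ?thesis
    unfolding vcomp_def by (blast intro: rtrancl_trans)
qed

lemma vcomp_eq_iff:
  assumes "w \<in> V"
  shows "vcomp V H v = vcomp V H w \<longleftrightarrow> (v, w) \<in> (H \<union> H\<inverse>)\<^sup>*"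
proof
  assume "vcomp V H v = vcomp V H w"
  then have "w \<in> vcomp V H v"
    using vcomp_self[OF assms, of H] by simp
  then show "(v, w) \<in> (H \<union> H\<inverse>)\<^sup>*"
    by (simp add: vcomp_def)
next
  assume "(v, w) \<in> (H \<union> H\<inverse>)\<^sup>*"
  then show "vcomp V H v = vcomp V H w"
    using assms vcomp_eq[of w V H v] by (simp add: vcomp_def)
qed

lemma vcomp_in_components: "v \<in> V \<Longrightarrow> vcomp V H v \<in> components V H"
  by (simp add: components_eq_vcomp_image)

lemma component_eq_vcomp: "C \<in> components V H \<Longrightarrow> v \<in> C \<Longrightarrow> C = vcomp V H v"
  by (auto simp: components_eq_vcomp_image dest: vcomp_eq)

lemma components_disjoint:
  "C \<in> components V H \<Longrightarrow> D \<in> components V H \<Longrightarrow> v \<in> C \<Longrightarrow> v \<in> D \<Longrightarrow> C = D"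
  using component_eq_vcomp by metis

lemma component_nonempty: "C \<in> components V H \<Longrightarrow> C \<noteq> {}"
  by (auto simp: components_eq_vcomp_image dest: vcomp_self)

lemma component_subset: "C \<in> components V H \<Longrightarrow> C \<subseteq> V"
  by (auto simp: components_eq_vcomp_image vcomp_def)

lemma finite_components: "finite V \<Longrightarrow> finite (components V H)"
  by (simp add: components_eq_vcomp_image)

lemma rtrancl_insert_edge:
  "(x, y) \<in> (insert (a, b) H \<union> (insert (a, b) H)\<inverse>)\<^sup>* \<longleftrightarrow>
   (x, y) \<in> (H \<union> H\<inverse>)\<^sup>* \<or> ((x, a) \<in> (H \<union> H\<inverse>)\<^sup>* \<and> (b, y) \<in> (H \<union> H\<inverse>)\<^sup>*) \<or>
   ((x, b) \<in> (H \<union> H\<inverse>)\<^sup>* \<and> (a, y) \<in> (H \<union> H\<inverse>)\<^sup>*)"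
  (is "?lhs \<longleftrightarrow> ?rhs")
proof
  assume ?lhs
  then show ?rhs
  proof (induction rule: rtrancl_induct)
    case (step y z)
    then have "(y, z) \<in> H \<union> H\<inverse> \<or> (y, z) = (a, b) \<or> (y, z) = (b, a)"
      by auto
    then show ?case
      using step.IH by (auto intro: rtrancl_into_rtrancl)
  qed simp
next
  have mono: "(H \<union> H\<inverse>)\<^sup>* \<subseteq> (insert (a, b) H \<union> (insert (a, b) H)\<inverse>)\<^sup>*"
    by (rule rtrancl_mono) auto
  have "(a, b) \<in> (insert (a, b) H \<union> (insert (a, b) H)\<inverse>)\<^sup>*"
    "(b, a) \<in> (insert (a, b) H \<union> (insert (a, b) H)\<inverse>)\<^sup>*"
    by auto
  then show "?rhs \<Longrightarrow> ?lhs"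
    using mono by (meson rtrancl_trans subsetD)
qed

lemma vcomp_insert_edge:
  assumes "a \<in> V" "b \<in> V"
  shows "vcomp V (insert (a, b) H) v =
    (if vcomp V H v \<in> {vcomp V H a, vcomp V H b} then vcomp V H a \<union> vcomp V H b else vcomp V H v)"
proof -
  let ?R = "(H \<union> H\<inverse>)\<^sup>*"
  have same: "(v, w) \<in> ?R \<longleftrightarrow> (c, w) \<in> ?R" if "(v, c) \<in> ?R" for c w
    using that rtrancl_Un_converse_sym[OF that] rtrancl_trans by metis
  consider (a) "(v, a) \<in> ?R" | (b) "(v, b) \<in> ?R" | (neither) "(v, a) \<notin> ?R" "(v, b) \<notin> ?R"
    by blast
  then show ?thesis
  proof cases
    case a
    then have "vcomp V (insert (a, b) H) v = vcomp V H a \<union> vcomp V H b"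
      using same[OF a] unfolding vcomp_def rtrancl_insert_edge by auto
    then show ?thesis
      using a vcomp_eq_iff[OF assms(1)] by simp
  next
    case b
    then have "vcomp V (insert (a, b) H) v = vcomp V H a \<union> vcomp V H b"
      using same[OF b] unfolding vcomp_def rtrancl_insert_edge by auto
    then show ?thesis
      using b vcomp_eq_iff[OF assms(2)] by simp
  next
    case neither
    then have "vcomp V (insert (a, b) H) v = vcomp V H v"
      unfolding vcomp_def rtrancl_insert_edge by auto
    then show ?thesis
      using neither vcomp_eq_iff[OF assms(1)] vcomp_eq_iff[OF assms(2)] by simp
  qed
qed

lemma components_insert_edge:
  assumes "a \<in> V" "b \<in> V"
  shows "components V (insert (a, b) H) =
    insert (vcomp V H a \<union> vcomp V H b) (components V H - {vcomp V H a, vcomp V H b})"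
proof -
  let ?Ca = "vcomp V H a" and ?Cb = "vcomp V H b"
  have "components V (insert (a, b) H) =
      (\<lambda>C. if C \<in> {?Ca, ?Cb} then ?Ca \<union> ?Cb else C) ` components V H"
    unfolding components_eq_vcomp_image image_image vcomp_insert_edge[OF assms] ..
  also have "\<dots> = insert (?Ca \<union> ?Cb) (components V H - {?Ca, ?Cb})"
    using vcomp_in_components[OF assms(1), of H] by auto
  finally show ?thesis .
qed

text \<open>Each component of a multipath is a path, hence a tree: it has one edge less than vertices.\<close>

lemma card_component_edges:
  assumes "is_multipath V E H" "C \<in> components V H"
  shows "card {e \<in> H. fst e \<in> C} = card C - 1"
proof -
  obtain xs where xs: "distinct xs" "set xs = C" "{e \<in> H. fst e \<in> C} = set (zip xs (tl xs))"
    using assms unfolding is_multipath_def by blast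
  have "card (set (zip xs (tl xs))) = length (zip xs (tl xs))"
    by (rule distinct_card[OF distinct_zipI1[OF xs(1)]])
  then have "card {e \<in> H. fst e \<in> C} = length xs - 1"
    using xs(3) by simp
  moreover have "card C = length xs"
    using xs(1,2) distinct_card by blast
  ultimately show ?thesis
    by simp
qed

lemma multipath_insert_edge_vcomp_neq:
  assumes "finite V" "H \<subseteq> V \<times> V" "a \<in> V" "b \<in> V" "(a, b) \<notin> H"
    "is_multipath V E H" "is_multipath V E (insert (a, b) H)"
  shows "vcomp V H a \<noteq> vcomp V H b"
proof
  assume eq: "vcomp V H a = vcomp V H b"
  let ?C = "vcomp V H a"
  have C: "?C \<in> components V H" "?C \<in> components V (insert (a, b) H)"
    using components_insert_edge[OF assms(3,4), of H] eq vcomp_in_components[OF assms(3), of H]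
    by auto
  have "{e \<in> insert (a, b) H. fst e \<in> ?C} = insert (a, b) {e \<in> H. fst e \<in> ?C}"
    using vcomp_self[OF assms(3)] by auto
  moreover have "finite H"
    using finite_subset[OF assms(2)] assms(1) by simp
  moreover have "card ?C > 0"
    using vcomp_self[OF assms(3), of H] finite_subset[OF vcomp_subset assms(1)] card_gt_0_iff
    by blast
  ultimately show False
    using card_component_edges[OF assms(6) C(1)] card_component_edges[OF assms(7) C(2)] assms(5)
    by simp
qed


section \<open>Components ordered by their least vertex\<close>

lemma linear_order_onD:
  assumes "linear_order_on V le"
  shows "x \<in> V \<Longrightarrow> (x, x) \<in> le"
    and "(x, y) \<in> le \<Longrightarrow> (y, z) \<in> le \<Longrightarrow> (x, z) \<in> le"
    and "(x, y) \<in> le \<Longrightarrow> (y, x) \<in> le \<Longrightarrow> x = y"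
    and "x \<in> V \<Longrightarrow> y \<in> V \<Longrightarrow> x \<noteq> y \<Longrightarrow> (x, y) \<in> le \<or> (y, x) \<in> le"
  using assms
  unfolding linear_order_on_def partial_order_on_def preorder_on_def refl_on_def total_on_def
    antisym_on_def trans_on_def
  by blast+

lemma minv_eqI: "linear_order_on V le \<Longrightarrow> w \<in> C \<Longrightarrow> \<forall>u\<in>C. (w, u) \<in> le \<Longrightarrow> minv le C = w"
  unfolding minv_def by (rule the_equality) (auto dest: linear_order_onD(3))

lemma minv_least:
  assumes lin: "linear_order_on V le" and "finite C" "C \<noteq> {}" "C \<subseteq> V"
  shows "minv le C \<in> C \<and> (\<forall>u\<in>C. (minv le C, u) \<in> le)"
proof -
  have "totalp_on C (\<lambda>x y. (x, y) \<in> le)" "transp_on C (\<lambda>x y. (x, y) \<in> le)"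
    using assms(4) linear_order_onD[OF lin]
    unfolding totalp_on_def transp_on_def by blast+
  then obtain xs where xs: "set xs = C" "sorted_wrt (\<lambda>x y. (x, y) \<in> le) xs"
    using sorted_wrt_exists[OF assms(2)] by blast
  then obtain w ws where "xs = w # ws"
    using assms(3) by (cases xs) auto
  then have "w \<in> C" "\<forall>u\<in>C. (w, u) \<in> le"
    using xs assms(4) linear_order_onD(1)[OF lin] by auto
  then show ?thesis
    using minv_eqI[OF lin] by simp
qed

definition comp_le :: "'v rel \<Rightarrow> 'v set \<Rightarrow> 'v set \<Rightarrow> bool" where
  "comp_le le C D \<longleftrightarrow> (minv le C, minv le D) \<in> le"

definition comp_less :: "'v rel \<Rightarrow> 'v set \<Rightarrow> 'v set \<Rightarrow> bool" where
  "comp_less le C D \<longleftrightarrow> comp_le le C D \<and> C \<noteq> D"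

lemma comp_le_trans:
  assumes "linear_order_on V le" "comp_le le C D" "comp_le le D F"
  shows "comp_le le C F"
  using assms(2,3) linear_order_onD(2)[OF assms(1)] unfolding comp_le_def by blast

lemma comp_list_def': "comp_list le V H =
    (THE cs. set cs = components V H \<and> distinct cs \<and> sorted_wrt (comp_le le) cs)"
  unfolding comp_list_def comp_le_def ..

context
  fixes V :: "'v set" and le :: "'v rel"
  assumes finite: "finite V" and lin: "linear_order_on V le"
begin

lemma minv_component:
  assumes "C \<in> components V H"
  shows "minv le C \<in> C" "\<forall>u\<in>C. (minv le C, u) \<in> le"
  using minv_least[OF lin finite_subset[OF component_subset[OF assms] finite]
      component_nonempty[OF assms] component_subset[OF assms]]
  by auto

lemma comp_le_antisym:
  assumes "C \<in> components V H" "D \<in> components V H" "comp_le le C D" "comp_le le D C"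
  shows "C = D"
proof -
  have "minv le C = minv le D"
    using assms(3,4) linear_order_onD(3)[OF lin] by (auto simp: comp_le_def)
  then show ?thesis
    using components_disjoint[OF assms(1,2)] minv_component(1) assms(1,2) by metis
qed

lemma comp_le_total:
  assumes "C \<in> components V H" "D \<in> components V H" "C \<noteq> D"
  shows "comp_le le C D \<or> comp_le le D C"
proof -
  have "minv le C \<noteq> minv le D"
    using components_disjoint[OF assms(1,2)] minv_component(1) assms by metis
  then show ?thesis
    using linear_order_onD(4)[OF lin] minv_component(1) component_subset assms(1,2)
    unfolding comp_le_def by blast
qed

lemma minv_Un_component:
  assumes "C \<in> components V H" "D \<in> components V H" "comp_le le C D"
  shows "minv le (C \<union> D) = minv le C"
proof (rule minv_eqI[OF lin])
  show "minv le C \<in> C \<union> D"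
    using minv_component(1)[OF assms(1)] by simp
  show "\<forall>u\<in>C \<union> D. (minv le C, u) \<in> le"
    using assms(3) minv_component(2)[OF assms(1)] minv_component(2)[OF assms(2)]
      linear_order_onD(2)[OF lin] unfolding comp_le_def by blast
qed

lemma comp_less_iff_not_less:
  assumes "C \<in> components V H" "D \<in> components V H" "C \<noteq> D"
  shows "comp_less le C D \<longleftrightarrow> \<not> comp_less le D C"
  using comp_le_total[OF assms] comp_le_antisym[OF assms(1,2)] assms(3)
  unfolding comp_less_def by blast

lemma transp_on_comp_less: "transp_on (components V H) (comp_less le)"
  unfolding transp_on_def comp_less_def using comp_le_trans[OF lin] comp_le_antisym by blast

lemma antisymp_on_comp_le: "antisymp_on (components V H) (comp_le le)"
  using comp_le_antisym by (auto simp: antisymp_on_def)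

lemma comp_list_unique:
  assumes "set cs = components V H" "distinct cs" "sorted_wrt (comp_le le) cs"
  shows "comp_list le V H = cs"
  unfolding comp_list_def'
proof (rule the_equality)
  fix ds assume "set ds = components V H \<and> distinct ds \<and> sorted_wrt (comp_le le) ds"
  then show "ds = cs"
    using sorted_wrt_distinct_unique[of "comp_le le" ds cs] assms antisymp_on_comp_le by simp
qed (use assms in simp)

lemma comp_list:
  "set (comp_list le V H) = components V H" "distinct (comp_list le V H)"
  "sorted_wrt (comp_le le) (comp_list le V H)"
proof -
  have "totalp_on (components V H) (comp_le le)" "transp_on (components V H) (comp_le le)"
    using comp_le_total comp_le_trans[OF lin] by (auto simp: totalp_on_def transp_on_def)
  then obtain cs where "set cs = components V H" "distinct cs" "sorted_wrt (comp_le le) cs"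
    using sorted_wrt_exists[OF finite_components[OF finite]] by blast
  then show "set (comp_list le V H) = components V H" "distinct (comp_list le V H)"
    "sorted_wrt (comp_le le) (comp_list le V H)"
    using comp_list_unique by simp_all
qed

lemma length_comp_list: "length (comp_list le V H) = card (components V H)"
  using comp_list(1,2) distinct_card by metis

lemma comp_idx_eq_position:
  assumes "v \<in> V"
  shows "comp_idx le V H v = position (comp_list le V H) (vcomp V H v)"
  unfolding comp_idx_def
proof (rule the_equality)
  let ?cs = "comp_list le V H"
  have "vcomp V H v \<in> set ?cs"
    using comp_list(1) vcomp_in_components[OF assms] by simp
  then show "position ?cs (vcomp V H v) < length ?cs \<and> v \<in> ?cs ! position ?cs (vcomp V H v)"
    using position_less_length[OF comp_list(2)] comp_list(2) vcomp_self[OF assms] by simp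
  fix i assume i: "i < length ?cs \<and> v \<in> ?cs ! i"
  then have "?cs ! i \<in> components V H"
    using nth_mem[of i ?cs] comp_list(1) by simp
  then have "?cs ! i = vcomp V H v"
    by (rule component_eq_vcomp) (use i in simp)
  then show "i = position ?cs (vcomp V H v)"
    using position_nth[OF comp_list(2)[of H] conjunct1[OF i]] by simp
qed

lemma position_comp_list:
  assumes "C \<in> components V H"
  shows "position (comp_list le V H) C = rank (comp_less le) (components V H) C"
proof -
  let ?cs = "comp_list le V H"
  have C: "C \<in> set ?cs"
    using comp_list(1) assms by simp
  have anti: "antisymp_on (set ?cs) (comp_le le)"
    using antisymp_on_comp_le comp_list(1) by simp
  have "card {D \<in> set ?cs. comp_le le D (?cs ! position ?cs C) \<and> D \<noteq> ?cs ! position ?cs C} =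
      position ?cs C"
    by (rule card_sorted_wrt_before[OF comp_list(3,2) anti position_less_length[OF comp_list(2) C]])
  then show ?thesis
    using nth_position[OF comp_list(2) C] comp_list(1) by (simp add: rank_def comp_less_def)
qed

end


definition reorder_sign :: "'v rel \<Rightarrow> 'v rel \<Rightarrow> 'v set \<Rightarrow> ('v \<times> 'v) set \<Rightarrow>
  'r::{comm_ring,monoid_mult}" where
  "reorder_sign le1 le2 V H = (- 1) ^ inversions (comp_less le1) (comp_less le2) (components V H)"

lemma reorder_sign_swap: "reorder_sign le2 le1 V H * reorder_sign le1 le2 V H = 1"
  using neg_one_power_eq_if_even_add[of "inversions (comp_less le1) (comp_less le2) (components V
    H) * 2" 0]
  by (simp add: reorder_sign_def inversions_swap[of "comp_less le2"] power_add[symmetric]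
    mult_2_right)


section \<open>Adding an edge to a multipath\<close>

locale edge_addition =
  fixes V :: "'v set" and E H :: "('v \<times> 'v) set" and a b :: 'v
  assumes digraph: "digraph V E"
    and multipath: "is_multipath V E H"
    and edge: "(a, b) \<in> E" "(a, b) \<notin> H"
    and multipath_insert: "is_multipath V E (insert (a, b) H)"
begin

lemma finite_V: "finite V"
  using digraph by (simp add: digraph_def)

lemma subset_V: "H \<subseteq> V \<times> V" "a \<in> V" "b \<in> V"
  using digraph multipath edge(1) by (auto simp: digraph_def is_multipath_def)

lemma finite_H: "finite H"
  using finite_subset[OF subset_V(1)] finite_V by simp

abbreviation "Ca \<equiv> vcomp V H a"
abbreviation "Cb \<equiv> vcomp V H b"
abbreviation "Cab \<equiv> Ca \<union> Cb"

lemma Ca_Cb_in: "Ca \<in> components V H" "Cb \<in> components V H"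
  by (simp_all add: vcomp_in_components subset_V)

lemma Ca_neq_Cb: "Ca \<noteq> Cb"
  using multipath_insert_edge_vcomp_neq[OF finite_V subset_V edge(2) multipath multipath_insert] .

lemma components_insert: "components V (insert (a, b) H) = insert Cab (components V H - {Ca, Cb})"
  using components_insert_edge[OF subset_V(2,3)] .

lemma Cab_notin: "Cab \<notin> components V H"
proof
  assume "Cab \<in> components V H"
  moreover have "a \<in> Cab"
    using vcomp_self[OF subset_V(2)] by blast
  ultimately have "Cab = Ca"
    by (rule component_eq_vcomp)
  then have "b \<in> Ca"
    using vcomp_self[OF subset_V(3), of H] by blast
  then have "Cb = Ca"
    by (rule vcomp_eq)
  then show False
    using Ca_neq_Cb by simp
qed

context
  fixes le assumes lin: "linear_order_on V le"
begin

abbreviation "cs \<equiv> comp_list le V H"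
abbreviation "s \<equiv> position cs Ca"
abbreviation "t \<equiv> position cs Cb"

lemma comp_list_H: "set cs = components V H" "distinct cs" "sorted_wrt (comp_le le) cs"
  using comp_list[OF finite_V lin, of H] by simp_all

lemma positions_Ca_Cb: "s < length cs" "cs ! s = Ca" "t < length cs" "cs ! t = Cb" "s \<noteq> t"
proof -
  show "s < length cs" "cs ! s = Ca" "t < length cs" "cs ! t = Cb"
    using comp_list_H Ca_Cb_in by (simp_all add: position_less_length)
  then show "s \<noteq> t"
    using Ca_neq_Cb by metis
qed

lemma comp_le_iff_less: "comp_le le Ca Cb \<longleftrightarrow> s < t"
proof
  assume "comp_le le Ca Cb"
  then show "s < t"
    using sorted_wrt_nth_less[OF comp_list_H(3), of t s] positions_Ca_Cb
      comp_le_antisym[OF finite_V lin Ca_Cb_in] Ca_neq_Cb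
    by (metis linorder_neqE_nat)
qed (use sorted_wrt_nth_less[OF comp_list_H(3)] positions_Ca_Cb in metis)

lemma sorted_wrt_comp_le:
  "sorted_wrt (comp_le le) xs \<longleftrightarrow> sorted_wrt (\<lambda>x y. (x, y) \<in> le) (map (minv le) xs)"
  by (simp add: sorted_wrt_map comp_le_def[abs_def])

lemma minv_Cab: "minv le Cab = minv le (cs ! min s t)"
proof (cases "s < t")
  case True
  then show ?thesis
    using minv_Un_component[OF finite_V lin Ca_Cb_in] comp_le_iff_less positions_Ca_Cb by simp
next
  case False
  then have "comp_le le Cb Ca"
    using comp_le_total[OF finite_V lin Ca_Cb_in Ca_neq_Cb] comp_le_iff_less by blast
  then show ?thesis
    using minv_Un_component[OF finite_V lin Ca_Cb_in(2,1)] False positions_Ca_Cb by (simp add: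
      Un_commute)
qed

lemma comp_list_insert: "comp_list le V (insert (a, b) H) = merge_at s t Cab cs"
proof -
  let ?m = "min s t" and ?M = "max s t"
  let ?ys = "cs[?m := Cab]"
  have m_M: "?m < length cs" "?M < length cs" "?m \<noteq> ?M"
    using positions_Ca_Cb by (simp_all add: min_def max_def)
  have "map (minv le) ?ys = map (minv le) cs"
    using minv_Cab m_M(1) by (simp add: map_update list_update_same_conv)
  then have sorted: "sorted_wrt (comp_le le) ?ys"
    using comp_list_H(3) by (simp only: sorted_wrt_comp_le)
  have distinct: "distinct ?ys"
    using distinct_list_update[OF comp_list_H(2)] Cab_notin comp_list_H(1) by blast
  have "cs ! ?M \<in> components V H"
    using nth_mem[OF m_M(2)] comp_list_H(1) by simp
  then have "Cab \<noteq> cs ! ?M"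
    using Cab_notin by auto
  then have "set ?ys - {?ys ! ?M} = insert Cab (components V H - {cs ! ?m, cs ! ?M})"
    using set_update_distinct[OF comp_list_H(2) m_M(1)] comp_list_H(1) m_M(3) by auto
  also have "{cs ! ?m, cs ! ?M} = {Ca, Cb}"
    using positions_Ca_Cb by (cases "s < t") auto
  finally have set: "set ?ys - {?ys ! ?M} = components V (insert (a, b) H)"
    unfolding components_insert .
  have "?M < length ?ys"
    using m_M(2) by simp
  show ?thesis
    unfolding merge_at_def Let_def
  proof (rule comp_list_unique[OF finite_V lin])
    show "set (take ?M ?ys @ drop (Suc ?M) ?ys) = components V (insert (a, b) H)"
      using set_delete_nth[OF distinct \<open>?M < length ?ys\<close>] set by (rule trans)
    show "distinct (take ?M ?ys @ drop (Suc ?M) ?ys)"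
      using distinct_delete_nth[OF distinct] .
    show "sorted_wrt (comp_le le) (take ?M ?ys @ drop (Suc ?M) ?ys)"
      using sorted_wrt_delete_nth[OF sorted \<open>?M < length ?ys\<close>] .
  qed
qed

text \<open>In particular the edge map does not depend on how the tensor factors are indexed.\<close>

lemma edge_map_map:
  "edge_map le V H (a, b) (map g cs) =
   map (g(Cab := g Ca * g Cb)) (comp_list le V (insert (a, b) H))"
proof -
  have "Cab \<notin> set cs"
    using Cab_notin comp_list_H(1) by simp
  then show ?thesis
    using positions_Ca_Cb comp_idx_eq_position[OF finite_V lin subset_V(2)]
      comp_idx_eq_position[OF finite_V lin subset_V(3)]
    by (simp add: edge_map_def merge_list_eq_merge_at comp_list_insert map_merge_at)
qed

lemma edge_sign_eq: "edge_sign le V H (a, b) = (- 1) ^ sigma s t"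
  using comp_idx_eq_position[OF finite_V lin subset_V(2)] comp_idx_eq_position[OF finite_V lin
    subset_V(3)]
  by (simp add: edge_sign_def)

lemma comp_less_Cab_iff:
  assumes "C \<in> components V H - {Ca, Cb}"
  shows "comp_less le C Cab \<longleftrightarrow> comp_less le C Ca \<and> comp_less le C Cb"
proof -
  have "C \<noteq> Cab"
    using assms Cab_notin by blast
  moreover have "comp_le le C Cab \<longleftrightarrow> comp_le le C Ca \<and> comp_le le C Cb"
  proof (cases "comp_le le Ca Cb")
    case True
    have "comp_le le C Cab \<longleftrightarrow> comp_le le C Ca"
      using minv_Un_component[OF finite_V lin Ca_Cb_in True] by (simp add: comp_le_def)
    then show ?thesis
      using comp_le_trans[OF lin _ True] by blast
  next
    case False
    then have ba: "comp_le le Cb Ca"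
      using comp_le_total[OF finite_V lin Ca_Cb_in Ca_neq_Cb] by blast
    have "comp_le le C Cab \<longleftrightarrow> comp_le le C Cb"
      using minv_Un_component[OF finite_V lin Ca_Cb_in(2,1) ba] by (simp add: comp_le_def Un_commute)
    then show ?thesis
      using comp_le_trans[OF lin _ ba] by blast
  qed
  ultimately show ?thesis
    using assms by (auto simp: comp_less_def)
qed

lemma Cab_neq: "Cab \<noteq> Ca" "Cab \<noteq> Cb"
  using Cab_notin Ca_Cb_in by auto

lemma edge_map_eq:
  assumes "length as = length cs"
  shows "edge_map le V H (a, b) as =
    map ((\<lambda>k. as ! position cs k)(Cab := as ! s * as ! t)) (comp_list le V (insert (a, b) H))"
  using edge_map_map[of "\<lambda>k. as ! position cs k"] map_nth_position[OF comp_list_H(2) assms]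
  by simp

lemma gen_ok_insert_edge:
  assumes "gen_ok V E n (H, as)"
  shows "gen_ok V E (Suc n) (insert (a, b) H, edge_map le V H (a, b) as)"
proof -
  have len: "length as = length cs"
    using assms length_comp_list[OF finite_V lin] by (simp add: gen_ok_def)
  have "length (edge_map le V H (a, b) as) = card (components V (insert (a, b) H))"
    unfolding edge_map_eq[OF len] by (simp add: length_comp_list[OF finite_V lin])
  moreover have "card (insert (a, b) H) = Suc n"
    using assms finite_H edge(2) by (simp add: gen_ok_def)
  ultimately show ?thesis
    using multipath_insert by (simp add: gen_ok_def)
qed

text \<open>The edge map is multilinear: \<open>\<phi>\<close> is multiplication by the factor of the other merged
  component, or the identity if the changed factor is not merged.\<close>

lemma edge_map_update:
  assumes alg: "is_algebra sm" and len: "length as = length cs" and i: "i < length as"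
  obtains j \<phi> where "j < length (edge_map le V H (a, b) as)"
    "\<And>x. edge_map le V H (a, b) (as[i := x]) = (edge_map le V H (a, b) as)[j := \<phi> x]"
    "\<And>x y. \<phi> (x + y) = \<phi> x + \<phi> y" "\<And>r x. \<phi> (sm r x) = sm r (\<phi> x)"
proof -
  let ?cs' = "comp_list le V (insert (a, b) H)" and ?C = "cs ! i"
  define g where "g k = as ! position cs k" for k
  define k where "k = (if ?C \<in> {Ca, Cb} then Cab else ?C)"
  define \<phi> where "\<phi> x = (if ?C = Ca then x * g Cb else if ?C = Cb then g Ca * x else x)" for x
  have as: "as = map g cs"
    unfolding g_def using map_nth_position[OF comp_list_H(2) len] by simp
  have C: "?C \<in> components V H"
    using nth_mem[of i cs] i len comp_list_H(1) by simp
  have cs': "set ?cs' = insert Cab (components V H - {Ca, Cb})" "distinct ?cs'"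
    using comp_list[OF finite_V lin] components_insert by simp_all
  have k: "k \<in> set ?cs'" "?C \<notin> {Ca, Cb} \<Longrightarrow> ?C \<noteq> Cab"
    using C Cab_notin unfolding k_def cs' by auto
  have "edge_map le V H (a, b) (as[i := x]) =
      map ((g(?C := x))(Cab := (g(?C := x)) Ca * (g(?C := x)) Cb)) ?cs'" for x
    using as map_fun_upd_position[OF comp_list_H(2) nth_mem[of i cs], of g x] i len comp_list_H(2)
      edge_map_map[of "g(?C := x)"]
    by simp
  also have "\<dots>x = map ((g(Cab := g Ca * g Cb))(k := \<phi> x)) ?cs'" for x
  proof (rule map_cong[OF refl])
    fix D assume "D \<in> set ?cs'"
    then have D: "D \<noteq> Ca" "D \<noteq> Cb"
      using Cab_neq unfolding cs'(1) by auto
    have neq: "Ca \<noteq> Cb" "Cb \<noteq> Ca" "Cab \<noteq> Ca" "Cab \<noteq> Cb"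
      using Ca_neq_Cb Cab_neq by auto
    consider "?C = Ca" | "?C = Cb" | "?C \<noteq> Ca" "?C \<noteq> Cb"
      by blast
    then show "((g(?C := x))(Cab := (g(?C := x)) Ca * (g(?C := x)) Cb)) D =
        ((g(Cab := g Ca * g Cb))(k := \<phi> x)) D"
    proof cases
      case 3
      then have "Ca \<noteq> ?C" "Cb \<noteq> ?C" "?C \<noteq> Cab"
        using k(2) by auto
      then show ?thesis
        using 3 D by (simp add: k_def \<phi>_def)
    qed (use D neq in \<open>simp_all add: k_def \<phi>_def\<close>)
  qed
  also have "\<dots>x = (edge_map le V H (a, b) as)[position ?cs' k := \<phi> x]" for x
    using map_fun_upd_position[OF cs'(2) k(1)] edge_map_map[of g] as by simp
  finally have "edge_map le V H (a, b) (as[i := x]) = (edge_map le V H (a, b) as)[position ?cs' k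
    := \<phi> x]"
    for x .
  moreover have "position ?cs' k < length (edge_map le V H (a, b) as)"
    using position_less_length[OF cs'(2) k(1)] edge_map_map[of g] as by simp
  moreover have "sm r x * y = sm r (x * y)" "x * sm r y = sm r (x * y)" for r x y
    using alg unfolding is_algebra_def by metis+
  then have "\<phi> (x + y) = \<phi> x + \<phi> y" "\<phi> (sm r x) = sm r (\<phi> x)" for x y r
    by (simp_all add: \<phi>_def distrib_left distrib_right)
  ultimately show ?thesis
    using that by blast
qed

end

lemma reorder_edge_map:
  assumes lin1: "linear_order_on V le1" and lin2: "linear_order_on V le2"
    and len: "length as = length (comp_list le1 V H)"
  shows "reorder (comp_list le1 V (insert (a, b) H)) (comp_list le2 V (insert (a, b) H))
      (edge_map le1 V H (a, b) as) =
    edge_map le2 V H (a, b) (reorder (comp_list le1 V H) (comp_list le2 V H) as)"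
proof -
  define g where "g k = as ! position (comp_list le1 V H) k" for k
  have as: "as = map g (comp_list le1 V H)"
    unfolding g_def using map_nth_position[OF comp_list(2)[OF finite_V lin1] len] by simp
  have "reorder (comp_list le1 V H) (comp_list le2 V H) as = map g (comp_list le2 V H)"
    unfolding as using comp_list[OF finite_V lin1] comp_list[OF finite_V lin2] by (simp add:
      reorder_map)
  then show ?thesis
    using as edge_map_map[OF lin1, of g] edge_map_map[OF lin2, of g]
      comp_list[OF finite_V lin1] comp_list[OF finite_V lin2] by (simp add: reorder_map)
qed

end


lemma (in edge_addition) merge_order_comp_less:
  assumes lin: "linear_order_on V le"
  shows "merge_order (comp_less le) (components V H - {Ca, Cb}) Ca Cb Cab"
proof
  have total: "strict_total_on (components V H') (comp_less le)" for H'
    using comp_less_iff_not_less[OF finite_V lin] by (auto simp: strict_total_on_def comp_less_def)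
  have before: "insert Ca (insert Cb (components V H - {Ca, Cb})) = components V H"
    using Ca_Cb_in by blast
  show "strict_total_on (insert Ca (insert Cb (components V H - {Ca, Cb}))) (comp_less le)"
    using total unfolding before .
  show "transp_on (insert Ca (insert Cb (components V H - {Ca, Cb}))) (comp_less le)"
    using transp_on_comp_less[OF finite_V lin] unfolding before .
  show "strict_total_on (insert Cab (components V H - {Ca, Cb})) (comp_less le)"
    using total unfolding components_insert[symmetric] .
qed (use finite_components[OF finite_V] Cab_notin Ca_neq_Cb comp_less_Cab_iff[OF lin] in auto)

lemma (in edge_addition) reorder_sign_edge_sign:
  assumes lin1: "linear_order_on V le1" and lin2: "linear_order_on V le2"
  shows "edge_sign le1 V H (a, b) * reorder_sign le1 le2 V (insert (a, b) H) =
    (reorder_sign le1 le2 V H :: 'r::{comm_ring,monoid_mult}) * edge_sign le2 V H (a, b)"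
proof -
  let ?W = "components V H - {Ca, Cb}"
  have before: "insert Ca (insert Cb ?W) = components V H"
    using Ca_Cb_in by blast
  have rank: "rank (comp_less le) (components V H) Ca = position (comp_list le V H) Ca"
    "rank (comp_less le) (components V H) Cb = position (comp_list le V H) Cb"
    if "linear_order_on V le" for le
    using position_comp_list[OF finite_V that Ca_Cb_in(1)] position_comp_list[OF finite_V that
      Ca_Cb_in(2)]
    by simp_all
  have "even (inversions (comp_less le1) (comp_less le2) (components V H)
      + sigma (position (comp_list le1 V H) Ca) (position (comp_list le1 V H) Cb)
      + inversions (comp_less le1) (comp_less le2) (components V (insert (a, b) H))
      + sigma (position (comp_list le2 V H) Ca) (position (comp_list le2 V H) Cb))"
    using inversions_sigma_parity[OF merge_order_comp_less[OF lin1] merge_order_comp_less[OF lin2]]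
    unfolding before components_insert rank[OF lin1] rank[OF lin2] .
  then have "(- 1 :: 'r) ^ (inversions (comp_less le1) (comp_less le2) (components V H)
        + sigma (position (comp_list le2 V H) Ca) (position (comp_list le2 V H) Cb)) =
      (- 1) ^ (inversions (comp_less le1) (comp_less le2) (components V (insert (a, b) H))
        + sigma (position (comp_list le1 V H) Ca) (position (comp_list le1 V H) Cb))"
    by (intro neg_one_power_eq_if_even_add) (simp add: algebra_simps)
  then show ?thesis
    by (simp add: reorder_sign_def edge_sign_eq[OF lin1] edge_sign_eq[OF lin2] power_add
      mult.commute)
qed


section \<open>Finitely supported functions and the free modules\<close>

definition finsupp_linear :: "(('x \<Rightarrow> 'r::{comm_ring,monoid_mult}) \<Rightarrow> ('y \<Rightarrow> 'r)) \<Rightarrow> bool" where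
  "finsupp_linear T \<longleftrightarrow>
    (\<forall>f g. finite {x. f x \<noteq> 0} \<longrightarrow> finite {x. g x \<noteq> 0} \<longrightarrow>
      T (\<lambda>x. f x + g x) = (\<lambda>y. T f y + T g y)) \<and>
    (\<forall>r f. finite {x. f x \<noteq> 0} \<longrightarrow> T (\<lambda>x. r * f x) = (\<lambda>y. r * T f y))"

lemma finite_support_add:
  "finite {x. f x \<noteq> 0} \<Longrightarrow> finite {x. g x \<noteq> 0} \<Longrightarrow> finite {x. f x + g x \<noteq> (0::'r::monoid_add)}"
  by (rule finite_subset[of _ "{x. f x \<noteq> 0} \<union> {x. g x \<noteq> 0}"]) auto

lemma finite_support_smult:
  "finite {x. f x \<noteq> 0} \<Longrightarrow> finite {x. r * f x \<noteq> (0::'r::mult_zero)}"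
  by (rule finite_subset[of _ "{x. f x \<noteq> 0}"]) auto

lemma finite_support_diff:
  "finite {x. f x \<noteq> 0} \<Longrightarrow> finite {x. g x \<noteq> 0} \<Longrightarrow> finite {x. f x - g x \<noteq> (0::'r::group_add)}"
  by (rule finite_subset[of _ "{x. f x \<noteq> 0} \<union> {x. g x \<noteq> 0}"]) auto

lemma finite_support_sum:
  assumes "finite A" "\<And>a. a \<in> A \<Longrightarrow> finite {x. g a x \<noteq> 0}"
  shows "finite {x. (\<Sum>a\<in>A. g a x) \<noteq> (0::'r::comm_monoid_add)}"
  using assms by (induction A rule: finite_induct) (simp_all add: finite_support_add)

lemma finite_support_delta: "finite {y. delta x y \<noteq> 0}"
  by (rule finite_subset[of _ "{x}"]) (auto simp: delta_def)

lemma finsupp_expansion: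
  assumes "finite {x. f x \<noteq> 0}"
  shows "(\<lambda>y. \<Sum>x | f x \<noteq> 0. f x * delta x y) = f"
proof
  fix y
  have "(\<Sum>x | f x \<noteq> 0. f x * delta x y) = (\<Sum>x | f x \<noteq> 0. if y = x then f x else 0)"
    by (rule sum.cong) (auto simp: delta_def)
  then show "(\<Sum>x | f x \<noteq> 0. f x * delta x y) = f y"
    using assms by (simp add: sum.delta')
qed

context
  fixes T :: "('x \<Rightarrow> 'r::{comm_ring,monoid_mult}) \<Rightarrow> ('y \<Rightarrow> 'r)"
  assumes T: "finsupp_linear T"
begin

lemma finsupp_linear_add:
  "finite {x. f x \<noteq> 0} \<Longrightarrow> finite {x. g x \<noteq> 0} \<Longrightarrow> T (\<lambda>x. f x + g x) = (\<lambda>y. T f y + T g y)"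
  using T by (simp add: finsupp_linear_def)

lemma finsupp_linear_smult: "finite {x. f x \<noteq> 0} \<Longrightarrow> T (\<lambda>x. r * f x) = (\<lambda>y. r * T f y)"
  using T by (simp add: finsupp_linear_def)

lemma finsupp_linear_zero: "T (\<lambda>x. 0) = (\<lambda>y. 0)"
  using finsupp_linear_smult[of "\<lambda>x. 0" 0] by simp

lemma finsupp_linear_diff:
  assumes "finite {x. f x \<noteq> 0}" "finite {x. g x \<noteq> 0}"
  shows "T (\<lambda>x. f x - g x) = (\<lambda>y. T f y - T g y)"
  using finsupp_linear_add[OF assms(1) finite_support_smult[OF assms(2), of "- 1"]]
    finsupp_linear_smult[OF assms(2), of "- 1"]
  by simp

lemma finsupp_linear_sum:
  assumes "finite A" "\<And>a. a \<in> A \<Longrightarrow> finite {x. g a x \<noteq> 0}"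
  shows "T (\<lambda>x. \<Sum>a\<in>A. g a x) = (\<lambda>y. \<Sum>a\<in>A. T (g a) y)"
  using assms
proof (induction A rule: finite_induct)
  case (insert a A)
  then show ?case
    using finsupp_linear_add[of "g a" "\<lambda>x. \<Sum>a\<in>A. g a x"] finite_support_sum[of A g] by simp
qed (simp add: finsupp_linear_zero)

lemma finsupp_linear_expansion:
  assumes "finite {x. f x \<noteq> 0}"
  shows "T f = (\<lambda>y. \<Sum>x | f x \<noteq> 0. f x * T (delta x) y)"
proof -
  have "T f = T (\<lambda>y. \<Sum>x | f x \<noteq> 0. f x * delta x y)"
    using finsupp_expansion[OF assms] by simp
  also have "\<dots> = (\<lambda>y. \<Sum>x | f x \<noteq> 0. T (\<lambda>z. f x * delta x z) y)"
    using assms finite_support_smult[OF finite_support_delta] by (rule finsupp_linear_sum)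
  also have "\<dots> = (\<lambda>y. \<Sum>x | f x \<noteq> 0. f x * T (delta x) y)"
    using finsupp_linear_smult[OF finite_support_delta] by simp
  finally show ?thesis .
qed

end

lemma finsupp_linear_comp:
  assumes "finsupp_linear T" "finsupp_linear T'" "\<And>f. finite {x. f x \<noteq> 0} \<Longrightarrow> finite {y. T f y \<noteq> 0}"
  shows "finsupp_linear (\<lambda>f. T' (T f))"
  using assms finsupp_linear_add[OF assms(1)] finsupp_linear_smult[OF assms(1)]
    finsupp_linear_add[OF assms(2)] finsupp_linear_smult[OF assms(2)]
  unfolding finsupp_linear_def by simp

lemma Fr_I: "finite {x. f x \<noteq> 0} \<Longrightarrow> (\<And>x. f x \<noteq> 0 \<Longrightarrow> gen_ok V E n x) \<Longrightarrow> f \<in> Fr V E n"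
  unfolding Fr_def by blast

lemma Fr_finite_support: "f \<in> Fr V E n \<Longrightarrow> finite {x. f x \<noteq> 0}"
  unfolding Fr_def by blast

lemma Fr_gen_ok: "f \<in> Fr V E n \<Longrightarrow> f x \<noteq> 0 \<Longrightarrow> gen_ok V E n x"
  unfolding Fr_def by blast

lemma Fr_zero: "(\<lambda>x. 0) \<in> Fr V E n"
  by (rule Fr_I) simp_all

lemma delta_in_Fr: "gen_ok V E n x \<Longrightarrow> delta x \<in> Fr V E n"
  by (rule Fr_I) (simp_all add: finite_support_delta delta_def split: if_splits)

lemma Fr_add:
  assumes "f \<in> Fr V E n" "g \<in> Fr V E n"
  shows "(\<lambda>x. f x + g x) \<in> Fr V E n"
proof (rule Fr_I)
  show "finite {x. f x + g x \<noteq> 0}"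
    using assms by (intro finite_support_add Fr_finite_support)
  fix x assume "f x + g x \<noteq> 0"
  then have "f x \<noteq> 0 \<or> g x \<noteq> 0"
    by auto
  then show "gen_ok V E n x"
    using Fr_gen_ok assms by blast
qed

lemma Fr_smult:
  assumes "f \<in> Fr V E n"
  shows "(\<lambda>x. r * f x) \<in> Fr V E n"
proof (rule Fr_I)
  show "finite {x. r * f x \<noteq> 0}"
    using assms by (intro finite_support_smult Fr_finite_support)
  fix x assume "r * f x \<noteq> 0"
  then have "f x \<noteq> 0"
    by auto
  then show "gen_ok V E n x"
    using Fr_gen_ok[OF assms] by blast
qed

lemma Fr_diff: "f \<in> Fr V E n \<Longrightarrow> g \<in> Fr V E n \<Longrightarrow> (\<lambda>x. f x - g x) \<in> Fr V E n"
  using Fr_add[of f V E n "\<lambda>x. - 1 * g x"] Fr_smult[of g V E n "- 1"] by simp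

lemma Fr_sum: "finite A \<Longrightarrow> (\<And>a. a \<in> A \<Longrightarrow> g a \<in> Fr V E n) \<Longrightarrow> (\<lambda>x. \<Sum>a\<in>A. g a x) \<in> Fr V E n"
  by (induction A rule: finite_induct) (auto intro: Fr_add Fr_zero)

lemma finsupp_linear_Fr:
  assumes "finsupp_linear T" "\<And>x. gen_ok V E n x \<Longrightarrow> T (delta x) \<in> Fr V' E' m"
    and "f \<in> Fr V E n"
  shows "T f \<in> Fr V' E' m"
  using assms Fr_finite_support[OF assms(3)] Fr_gen_ok[OF assms(3)]
  by (auto simp: finsupp_linear_expansion intro!: Fr_sum Fr_smult)

lemma finsupp_linear_eq_on_Fr:
  assumes "finsupp_linear T" "finsupp_linear T'"
    and "\<And>x. gen_ok V E n x \<Longrightarrow> T (delta x) = T' (delta x)" and "f \<in> Fr V E n"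
  shows "T f = T' f"
  using assms Fr_finite_support[OF assms(4)] Fr_gen_ok[OF assms(4)]
  by (auto simp: finsupp_linear_expansion intro!: sum.cong)

lemma Nrel_subset_Fr: "h \<in> Nrel sm V E n \<Longrightarrow> h \<in> Fr V E n"
proof (induction rule: Nrel.induct)
  case (gen_add H as i a b)
  then have "gen_ok V E n (H, as[i := c])" for c
    by (simp add: gen_ok_def)
  then show ?case
    by (intro Fr_diff delta_in_Fr)
next
  case (gen_smult H as i r a)
  then have "gen_ok V E n (H, as[i := c])" for c
    by (simp add: gen_ok_def)
  then show ?case
    by (intro Fr_diff Fr_smult delta_in_Fr)
qed (auto intro: Fr_zero Fr_add Fr_smult)

lemma Nrel_diff: "f \<in> Nrel sm V E n \<Longrightarrow> g \<in> Nrel sm V E n \<Longrightarrow> (\<lambda>y. f y - g y) \<in> Nrel sm V E n"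
  using Nrel.add[OF _ Nrel.smult, of f sm V E n g "- 1"] by simp

lemma Nrel_sum:
  "finite A \<Longrightarrow> (\<And>a. a \<in> A \<Longrightarrow> g a \<in> Nrel sm V E n) \<Longrightarrow> (\<lambda>y. \<Sum>a\<in>A. g a y) \<in> Nrel sm V E n"
  by (induction A rule: finite_induct) (auto intro: Nrel.zero Nrel.add)

lemma finsupp_linear_Nrel:
  assumes T: "finsupp_linear T"
    and add: "\<And>H as i a b. gen_ok V E n (H, as) \<Longrightarrow> i < length as \<Longrightarrow>
      (\<lambda>y. T (delta (H, as[i := a + b])) y - T (delta (H, as[i := a])) y - T (delta (H, as[i :=
        b])) y)
        \<in> Nrel sm V' E' m"
    and smult: "\<And>H as i r a. gen_ok V E n (H, as) \<Longrightarrow> i < length as \<Longrightarrow>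
      (\<lambda>y. T (delta (H, as[i := sm r a])) y - r * T (delta (H, as[i := a])) y) \<in> Nrel sm V' E' m"
  shows "h \<in> Nrel sm V E n \<Longrightarrow> T h \<in> Nrel sm V' E' m"
proof (induction rule: Nrel.induct)
  case (gen_add H as i a b)
  have "T (\<lambda>y. delta (H, as[i := a + b]) y - delta (H, as[i := a]) y - delta (H, as[i := b]) y) =
    (\<lambda>y. T (delta (H, as[i := a + b])) y - T (delta (H, as[i := a])) y - T (delta (H, as[i := b]))
      y)"
    using finsupp_linear_diff[OF T finite_support_diff[OF finite_support_delta finite_support_delta]
        finite_support_delta]
      finsupp_linear_diff[OF T finite_support_delta finite_support_delta]
    by simp
  then show ?case
    using add[OF gen_add] by simp
next
  case (gen_smult H as i r a)
  have "T (\<lambda>y. delta (H, as[i := sm r a]) y - r * delta (H, as[i := a]) y) =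
    (\<lambda>y. T (delta (H, as[i := sm r a])) y - r * T (delta (H, as[i := a])) y)"
    using finsupp_linear_diff[OF T finite_support_delta finite_support_smult[OF
      finite_support_delta]]
      finsupp_linear_smult[OF T finite_support_delta]
    by simp
  then show ?case
    using smult[OF gen_smult] by simp
next
  case zero
  then show ?case
    by (simp add: finsupp_linear_zero[OF T] Nrel.zero)
next
  case (add f g)
  have "finite {x. f x \<noteq> 0}" "finite {x. g x \<noteq> 0}"
    using add.hyps Nrel_subset_Fr Fr_finite_support by blast+
  then show ?case
    using Nrel.add[OF add.IH] by (simp add: finsupp_linear_add[OF T])
next
  case (smult f r)
  have "finite {x. f x \<noteq> 0}"
    using smult.hyps Nrel_subset_Fr Fr_finite_support by blast
  then show ?case
    using Nrel.smult[OF smult.IH] by (simp add: finsupp_linear_smult[OF T])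
qed


lemma dfree_eq_sum:
  fixes f :: "('v \<times> 'v) set \<times> 'a::{ring,monoid_mult} list \<Rightarrow> 'r::{comm_ring,monoid_mult}"
  assumes F: "finite F" "{x. f x \<noteq> 0} \<subseteq> F" and E: "finite E"
  shows "dfree le V E f (H', bs) = (\<Sum>x\<in>F. \<Sum>e\<in>E.
    if e \<notin> fst x \<and> is_multipath V E (insert e (fst x)) \<and> H' = insert e (fst x) \<and>
       bs = edge_map le V (fst x) e (snd x)
    then edge_sign le V (fst x) e * f x else 0)"
proof -
  define c where "c x e \<longleftrightarrow> e \<notin> fst x \<and> is_multipath V E (insert e (fst x)) \<and>
    H' = insert e (fst x) \<and> bs = edge_map le V (fst x) e (snd x)" for x e
  define S where "S = {p \<in> F \<times> E. f (fst p) \<noteq> 0 \<and> c (fst p) (snd p)}"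
  have "(\<Sum>x\<in>F. \<Sum>e\<in>E. if c x e then edge_sign le V (fst x) e * f x else 0) =
      (\<Sum>p\<in>F \<times> E. if c (fst p) (snd p) then edge_sign le V (fst (fst p)) (snd p) * f (fst p) else 0)"
    by (simp add: sum.cartesian_product case_prod_beta)
  also have "\<dots> = (\<Sum>p\<in>S. edge_sign le V (fst (fst p)) (snd p) * f (fst p))"
    using F E by (intro sum.mono_neutral_cong_right) (auto simp: S_def)
  also have "\<dots> = (\<Sum>(H, as, e) \<in> (\<lambda>((H, as), e). (H, as, e)) ` S. edge_sign le V H e * f (H, as))"
    by (subst sum.reindex) (auto simp: inj_on_def case_prod_beta)
  also have "(\<lambda>((H, as), e). (H, as, e)) ` S = {(H, as, e). f (H, as) \<noteq> 0 \<and> e \<in> E \<and> e \<notin> H \<and>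
      is_multipath V E (insert e H) \<and> H' = insert e H \<and> bs = edge_map le V H e as}"
    using F by (force simp: S_def c_def image_iff)
  finally show ?thesis
    by (simp add: dfree_def c_def)
qed

lemma finsupp_linear_dfree:
  assumes "finite E"
  shows "finsupp_linear
    (dfree le V E :: (('v \<times> 'v) set \<times> 'a::{ring,monoid_mult} list \<Rightarrow> 'r::{comm_ring,monoid_mult}) \<Rightarrow>
      _)"
  unfolding finsupp_linear_def
proof (intro conjI allI impI ext)
  fix f g :: "('v \<times> 'v) set \<times> 'a list \<Rightarrow> 'r" and y :: "('v \<times> 'v) set \<times> 'a list"
  assume "finite {x. f x \<noteq> 0}" "finite {x. g x \<noteq> 0}"
  then have F: "finite ({x. f x \<noteq> 0} \<union> {x. g x \<noteq> 0})"
    by simp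
  have sub: "{x. f x + g x \<noteq> 0} \<subseteq> {x. f x \<noteq> 0} \<union> {x. g x \<noteq> 0}"
    "{x. f x \<noteq> 0} \<subseteq> {x. f x \<noteq> 0} \<union> {x. g x \<noteq> 0}"
    "{x. g x \<noteq> 0} \<subseteq> {x. f x \<noteq> 0} \<union> {x. g x \<noteq> 0}"
    by auto
  obtain H' bs where y: "y = (H', bs)"
    by (cases y)
  show "dfree le V E (\<lambda>x. f x + g x) y = dfree le V E f y + dfree le V E g y"
    unfolding y dfree_eq_sum[OF F sub(1) assms] dfree_eq_sum[OF F sub(2) assms]
      dfree_eq_sum[OF F sub(3) assms]
    by (simp add: sum.distrib[symmetric] distrib_left if_distrib[of "\<lambda>x. x + _"] cong: if_cong)
next
  fix f :: "('v \<times> 'v) set \<times> 'a list \<Rightarrow> 'r" and r and y :: "('v \<times> 'v) set \<times> 'a list"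
  assume F: "finite {x. f x \<noteq> 0}"
  have sub: "{x. r * f x \<noteq> 0} \<subseteq> {x. f x \<noteq> 0}" "{x. f x \<noteq> 0} \<subseteq> {x. f x \<noteq> 0}"
    by auto
  obtain H' bs where y: "y = (H', bs)"
    by (cases y)
  show "dfree le V E (\<lambda>x. r * f x) y = r * dfree le V E f y"
    unfolding y dfree_eq_sum[OF F sub(1) assms] dfree_eq_sum[OF F sub(2) assms]
    by (auto simp: sum_distrib_left mult.left_commute intro!: sum.cong)
qed

lemma finite_support_if: "finite {x. f x \<noteq> 0} \<Longrightarrow> finite {x. (if c then f x else 0) \<noteq> 0}"
  by (cases c) simp_all

lemma dfree_delta:
  fixes H :: "('v \<times> 'v) set" and as :: "'a::{ring,monoid_mult} list"
  assumes "finite E"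
  shows "dfree le V E (delta (H, as) :: _ \<Rightarrow> 'r::{comm_ring,monoid_mult}) = (\<lambda>y. \<Sum>e\<in>E.
    if e \<notin> H \<and> is_multipath V E (insert e H)
    then edge_sign le V H e * delta (insert e H, edge_map le V H e as) y else 0)"
proof
  fix y :: "('v \<times> 'v) set \<times> 'a list"
  obtain H' bs where y: "y = (H', bs)"
    by (cases y)
  have sub: "{x. delta (H, as) x \<noteq> (0::'r)} \<subseteq> {(H, as)}"
    by (auto simp: delta_def)
  show "dfree le V E (delta (H, as)) y = (\<Sum>e\<in>E. if e \<notin> H \<and> is_multipath V E (insert e H)
    then edge_sign le V H e * (delta (insert e H, edge_map le V H e as) y :: 'r) else 0)"
    unfolding y dfree_eq_sum[OF finite.insertI[OF finite.emptyI] sub assms]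
    by (auto simp: delta_def intro!: sum.cong)
qed

lemma finite_support_dfree:
  assumes "finite E" "finite {x. f x \<noteq> 0}"
  shows "finite {y. dfree le V E f y \<noteq> 0}"
proof -
  have "finite {y. dfree le V E (delta x) y \<noteq> (0::'r::{comm_ring,monoid_mult})}" for x
    by (cases x) (simp add: dfree_delta[OF assms(1)] finite_support_sum finite_support_if
        finite_support_smult finite_support_delta assms(1))
  then show ?thesis
    unfolding finsupp_linear_expansion[OF finsupp_linear_dfree[OF assms(1)] assms(2)]
    by (intro finite_support_sum finite_support_smult assms(2))
qed


lemma edge_additionI:
  assumes "digraph V E" "is_multipath V E H" "e \<in> E" "e \<notin> H" "is_multipath V E (insert e H)"
  shows "edge_addition V E H (fst e) (snd e)"
  using assms by (intro edge_addition.intro) simp_all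

lemma digraph_finite_edges: "digraph V E \<Longrightarrow> finite E"
  unfolding digraph_def by (meson finite_SigmaI finite_subset)

context
  fixes V :: "'v set" and E :: "('v \<times> 'v) set" and le :: "'v rel"
  assumes digraph: "digraph V E" and lin: "linear_order_on V le"
begin

lemma dfree_delta_Fr:
  assumes "gen_ok V E n x"
  shows "dfree le V E (delta x :: _ \<Rightarrow> 'r::{comm_ring,monoid_mult}) \<in> Fr V E (Suc n)"
proof -
  obtain H as where x: "x = (H, as)"
    by (cases x)
  have "(\<lambda>y. if e \<notin> H \<and> is_multipath V E (insert e H)
      then edge_sign le V H e * (delta (insert e H, edge_map le V H e as) y :: 'r) else 0) \<in> Fr V
        E (Suc n)"
    if "e \<in> E" for e
  proof (cases "e \<notin> H \<and> is_multipath V E (insert e H)")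
    case True
    then interpret edge_addition V E H "fst e" "snd e"
      using edge_additionI[OF digraph _ that] assms x by (simp add: gen_ok_def)
    have "gen_ok V E (Suc n) (insert e H, edge_map le V H e as)"
      using gen_ok_insert_edge[OF lin] assms x by simp
    then show ?thesis
      using True Fr_smult[OF delta_in_Fr] by simp
  qed (use Fr_zero in auto)
  then show ?thesis
    unfolding x dfree_delta[OF digraph_finite_edges[OF digraph]] by (rule Fr_sum[OF
      digraph_finite_edges[OF digraph]])
qed

lemma dfree_Fr: "f \<in> Fr V E n \<Longrightarrow> dfree le V E f \<in> Fr V E (Suc n)"
  using finsupp_linear_Fr[OF finsupp_linear_dfree[OF digraph_finite_edges[OF digraph]]
    dfree_delta_Fr] .

lemma dfree_delta_relations:
  fixes sm :: "'r::{comm_ring,monoid_mult} \<Rightarrow> 'a::{ring,monoid_mult} \<Rightarrow> 'a"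
  assumes alg: "is_algebra sm" and gen: "gen_ok V E n (H, as)" and i: "i < length as"
  shows "(\<lambda>y. dfree le V E (delta (H, as[i := a + b])) y - dfree le V E (delta (H, as[i := a])) y
      - dfree le V E (delta (H, as[i := b])) y) \<in> Nrel sm V E (Suc n)"
    and "(\<lambda>y. dfree le V E (delta (H, as[i := sm r a])) y - r * dfree le V E (delta (H, as[i :=
      a])) y)
      \<in> Nrel sm V E (Suc n)"
proof -
  let ?valid = "\<lambda>e. e \<notin> H \<and> is_multipath V E (insert e H)"
  let ?d = "\<lambda>e x. delta (insert e H, edge_map le V H e (as[i := x])) :: _ \<Rightarrow> 'r"
  have rel: "(\<lambda>y. ?d e (a + b) y - ?d e a y - ?d e b y) \<in> Nrel sm V E (Suc n) \<and>
      (\<lambda>y. ?d e (sm r a) y - r * ?d e a y) \<in> Nrel sm V E (Suc n)"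
    if "e \<in> E" "?valid e" for e
  proof -
    interpret edge_addition V E H "fst e" "snd e"
      using edge_additionI[OF digraph _ that(1) conjunct1[OF that(2)] conjunct2[OF that(2)]] gen
      by (simp add: gen_ok_def)
    have len: "length as = length (comp_list le V H)"
      using gen length_comp_list[OF finite_V lin] by (simp add: gen_ok_def)
    obtain j \<phi> where j: "j < length (edge_map le V H e as)"
      and upd: "\<And>x. edge_map le V H e (as[i := x]) = (edge_map le V H e as)[j := \<phi> x]"
      and \<phi>: "\<And>x y. \<phi> (x + y) = \<phi> x + \<phi> y" "\<And>r x. \<phi> (sm r x) = sm r (\<phi> x)"
      using edge_map_update[OF lin alg len i, unfolded prod.collapse] by blast
    have "gen_ok V E (Suc n) (insert e H, edge_map le V H e as)"
      using gen_ok_insert_edge[OF lin gen] by simp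
    then show ?thesis
      unfolding upd \<phi> by (intro conjI Nrel.gen_add Nrel.gen_smult j)
  qed
  have E: "finite E"
    using digraph_finite_edges[OF digraph] .
  show "(\<lambda>y. dfree le V E (delta (H, as[i := a + b])) y - dfree le V E (delta (H, as[i := a])) y
      - dfree le V E (delta (H, as[i := b])) y) \<in> Nrel sm V E (Suc n)"
  proof -
    have "(\<lambda>y. if ?valid e then edge_sign le V H e * (?d e (a + b) y - ?d e a y - ?d e b y) else 0)
        \<in> Nrel sm V E (Suc n)" if "e \<in> E" for e
    proof (cases "?valid e")
      case True
      then show ?thesis
        using Nrel.smult[OF conjunct1[OF rel[OF that True]]] by simp
    next
      case False
      then show ?thesis
        using Nrel.zero by (simp only: if_not_P[OF False] if_False)
    qed
    then have "(\<lambda>y. \<Sum>e\<in>E. if ?valid e then edge_sign le V H e * (?d e (a + b) y - ?d e a y - ?d e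
      b y)
        else 0) \<in> Nrel sm V E (Suc n)"
      by (rule Nrel_sum[OF E])
    then show ?thesis
      unfolding dfree_delta[OF E]
      by (rule back_subst[of "\<lambda>f. f \<in> _"])
        (intro ext, auto simp: sum_subtractf[symmetric] right_diff_distrib intro!: sum.cong)
  qed
  show "(\<lambda>y. dfree le V E (delta (H, as[i := sm r a])) y - r * dfree le V E (delta (H, as[i :=
    a])) y)
      \<in> Nrel sm V E (Suc n)"
  proof -
    have "(\<lambda>y. if ?valid e then edge_sign le V H e * (?d e (sm r a) y - r * ?d e a y) else 0)
        \<in> Nrel sm V E (Suc n)" if "e \<in> E" for e
    proof (cases "?valid e")
      case True
      then show ?thesis
        using Nrel.smult[OF conjunct2[OF rel[OF that True]]] by simp
    next
      case False
      then show ?thesis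
        using Nrel.zero by (simp only: if_not_P[OF False] if_False)
    qed
    then have "(\<lambda>y. \<Sum>e\<in>E. if ?valid e then edge_sign le V H e * (?d e (sm r a) y - r * ?d e a y)
        else 0) \<in> Nrel sm V E (Suc n)"
      by (rule Nrel_sum[OF E])
    then show ?thesis
      unfolding dfree_delta[OF E]
      by (rule back_subst[of "\<lambda>f. f \<in> _"])
        (intro ext, auto simp: sum_subtractf[symmetric] sum_distrib_left right_diff_distrib
          mult.left_commute intro!: sum.cong)
  qed
qed

lemma dfree_Nrel: "is_algebra sm \<Longrightarrow> h \<in> Nrel sm V E n \<Longrightarrow> dfree le V E h \<in> Nrel sm V E (Suc n)"
  by (rule finsupp_linear_Nrel[OF finsupp_linear_dfree[OF digraph_finite_edges[OF digraph]]])
    (auto intro: dfree_delta_relations)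

end


section \<open>Changing the order of the vertices\<close>

text \<open>The coefficient of a generator whose factors are listed along \<open>comp_list le2\<close> is read off at
  the generator with the same factors listed along \<open>comp_list le1\<close>, and multiplied by the sign of
  the permutation relating the two lists.\<close>

definition change_order :: "'v rel \<Rightarrow> 'v rel \<Rightarrow> 'v set \<Rightarrow>
    (('v \<times> 'v) set \<times> 'a list \<Rightarrow> 'r::{comm_ring,monoid_mult}) \<Rightarrow> (('v \<times> 'v) set \<times> 'a list \<Rightarrow> 'r)" where
  "change_order le1 le2 V f = (\<lambda>(H, bs). if length bs = length (comp_list le2 V H)
    then reorder_sign le1 le2 V H * f (H, reorder (comp_list le2 V H) (comp_list le1 V H) bs) else
      0)"

lemma change_order_sum:
  "change_order le1 le2 V (\<lambda>x. \<Sum>a\<in>A. c a * g a x) = (\<lambda>y. \<Sum>a\<in>A. c a * change_order le1 le2 V (g a)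
    y)"
  by (auto simp: change_order_def sum_distrib_left mult.left_commute)

lemma change_order_add:
  "change_order le1 le2 V (\<lambda>x. f x + g x) = (\<lambda>y. change_order le1 le2 V f y + change_order le1 le2
    V g y)"
  by (auto simp: change_order_def distrib_left)

lemma change_order_diff:
  "change_order le1 le2 V (\<lambda>x. f x - g x) = (\<lambda>y. change_order le1 le2 V f y - change_order le1 le2
    V g y)"
  by (auto simp: change_order_def right_diff_distrib)

lemma finsupp_linear_change_order: "finsupp_linear (change_order le1 le2 V)"
  by (auto simp: finsupp_linear_def change_order_def distrib_left mult.left_commute)

context
  fixes V :: "'v set" and le1 le2 :: "'v rel"
  assumes finite: "finite V" and lin1: "linear_order_on V le1" and lin2: "linear_order_on V le2"
begin

lemma comp_lists:
  "distinct (comp_list le1 V H)" "distinct (comp_list le2 V H)"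
  "set (comp_list le1 V H) = set (comp_list le2 V H)"
  "length (comp_list le1 V H) = length (comp_list le2 V H)"
  using comp_list[OF finite lin1] comp_list[OF finite lin2] length_comp_list[OF finite lin1]
    length_comp_list[OF finite lin2]
  by simp_all

lemma change_order_delta:
  assumes "length as = length (comp_list le1 V H)"
  shows "change_order le1 le2 V (delta (H, as)) =
    (\<lambda>y. reorder_sign le1 le2 V H * delta (H, reorder (comp_list le1 V H) (comp_list le2 V H) as)
      y)"
proof
  fix y :: "('v \<times> 'v) set \<times> 'a list"
  obtain H' bs where y: "y = (H', bs)"
    by (cases y)
  have "reorder (comp_list le2 V H) (comp_list le1 V H) bs = as \<longleftrightarrow>
      bs = reorder (comp_list le1 V H) (comp_list le2 V H) as"
    if "length bs = length (comp_list le2 V H)"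
    using reorder_reorder[of "comp_list le2 V H" "comp_list le1 V H" bs]
      reorder_reorder[of "comp_list le1 V H" "comp_list le2 V H" as] comp_lists that assms
    by auto
  then show "change_order le1 le2 V (delta (H, as)) y =
      reorder_sign le1 le2 V H * delta (H, reorder (comp_list le1 V H) (comp_list le2 V H) as) y"
    unfolding y by (auto simp: change_order_def delta_def)
qed

lemma finite_support_change_order:
  assumes "finite {x. f x \<noteq> 0}"
  shows "finite {y. change_order le1 le2 V f y \<noteq> 0}"
proof (rule finite_subset)
  show "{y. change_order le1 le2 V f y \<noteq> 0} \<subseteq>
      (\<lambda>(H, as). (H, reorder (comp_list le1 V H) (comp_list le2 V H) as)) ` {x. f x \<noteq> 0}"
  proof clarify
    fix H bs assume "change_order le1 le2 V f (H, bs) \<noteq> 0"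
    then have "length bs = length (comp_list le2 V H)"
      "f (H, reorder (comp_list le2 V H) (comp_list le1 V H) bs) \<noteq> 0"
      by (auto simp: change_order_def split: if_splits)
    then show "(H, bs) \<in> (\<lambda>(H, as). (H, reorder (comp_list le1 V H) (comp_list le2 V H) as)) `
        {x. f x \<noteq> 0}"
      using reorder_reorder[of "comp_list le2 V H" "comp_list le1 V H" bs] comp_lists
      by (intro image_eqI[of _ _ "(H, reorder (comp_list le2 V H) (comp_list le1 V H) bs)"]) auto
  qed
qed (use assms in simp)

lemma gen_ok_reorder_comp_list:
  "gen_ok V E n (H, as) \<Longrightarrow> gen_ok V E n (H, reorder (comp_list le1 V H) (comp_list le2 V H) as)"
  using length_comp_list[OF finite lin2] by (simp add: gen_ok_def)

lemma length_comp_list_gen_ok: "gen_ok V E n (H, as) \<Longrightarrow> length as = length (comp_list le1 V H)"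
  using length_comp_list[OF finite lin1] by (simp add: gen_ok_def)

lemma change_order_Fr:
  assumes "f \<in> Fr V E n"
  shows "change_order le1 le2 V f \<in> Fr V E n"
proof (rule finsupp_linear_Fr[OF finsupp_linear_change_order _ assms])
  fix x assume "gen_ok V E n x"
  then obtain H as where x: "x = (H, as)" "gen_ok V E n (H, as)"
    by (cases x) auto
  then show "change_order le1 le2 V (delta x) \<in> Fr V E n"
    using Fr_smult[OF delta_in_Fr[OF gen_ok_reorder_comp_list[OF x(2)]]]
    by (simp add: change_order_delta[OF length_comp_list_gen_ok[OF x(2)]])
qed

lemma change_order_Nrel:
  fixes sm :: "'r::{comm_ring,monoid_mult} \<Rightarrow> 'a::{ring,monoid_mult} \<Rightarrow> 'a"
  shows "h \<in> Nrel sm V E n \<Longrightarrow> change_order le1 le2 V h \<in> Nrel sm V E n"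
proof (rule finsupp_linear_Nrel[OF finsupp_linear_change_order])
  fix H and as :: "'a list" and i
  assume gen: "gen_ok V E n (H, as)" and i: "i < length as"
  let ?j = "position (comp_list le2 V H) (comp_list le1 V H ! i)"
  let ?bs = "reorder (comp_list le1 V H) (comp_list le2 V H) as"
  have len: "length (as[i := x]) = length (comp_list le1 V H)" for x
    using length_comp_list_gen_ok[OF gen] by simp
  have upd: "reorder (comp_list le1 V H) (comp_list le2 V H) (as[i := x]) = ?bs[?j := x]" for x
    using reorder_update[OF comp_lists(1-3) length_comp_list_gen_ok[OF gen], of i x]
      length_comp_list_gen_ok[OF gen] i
    by simp
  have "comp_list le1 V H ! i \<in> set (comp_list le2 V H)"
    using nth_mem[of i "comp_list le1 V H"] comp_lists(3) length_comp_list_gen_ok[OF gen] i by simp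
  then have j: "?j < length ?bs"
    using position_less_length[OF comp_lists(2)] by simp
  have gen': "gen_ok V E n (H, ?bs)"
    using gen_ok_reorder_comp_list[OF gen] .
  show "(\<lambda>y. change_order le1 le2 V (delta (H, as[i := a + b])) y
      - change_order le1 le2 V (delta (H, as[i := a])) y
      - change_order le1 le2 V (delta (H, as[i := b])) y) \<in> Nrel sm V E n" for a b
    using Nrel.smult[OF Nrel.gen_add[OF gen' j], of "reorder_sign le1 le2 V H"]
    by (simp add: change_order_delta[OF len] upd right_diff_distrib)
  show "(\<lambda>y. change_order le1 le2 V (delta (H, as[i := sm r a])) y
      - r * change_order le1 le2 V (delta (H, as[i := a])) y) \<in> Nrel sm V E n" for r a
    using Nrel.smult[OF Nrel.gen_smult[OF gen' j], of "reorder_sign le1 le2 V H"]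
    by (simp add: change_order_delta[OF len] upd right_diff_distrib mult.left_commute)
qed

end

lemma change_order_smult:
  "change_order le1 le2 V (\<lambda>x. r * f x) = (\<lambda>y. r * change_order le1 le2 V f y)"
  by (auto simp: change_order_def mult.left_commute)

lemma change_order_inverse:
  assumes finite: "finite V" and lin1: "linear_order_on V le1" and lin2: "linear_order_on V le2"
    and f: "f \<in> Fr V E n"
  shows "change_order le2 le1 V (change_order le1 le2 V f) = f"
proof (rule finsupp_linear_eq_on_Fr[OF _ _ _ f])
  show "finsupp_linear (\<lambda>f. change_order le2 le1 V (change_order le1 le2 V f))"
    by (rule finsupp_linear_comp[OF finsupp_linear_change_order finsupp_linear_change_order
          finite_support_change_order[OF finite lin1 lin2]])
  show "finsupp_linear (\<lambda>f. f)"
    by (simp add: finsupp_linear_def)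
  fix x assume "gen_ok V E n x"
  then obtain H as where x: "x = (H, as)" "gen_ok V E n (H, as)"
    by (cases x) auto
  let ?L1 = "comp_list le1 V H" and ?L2 = "comp_list le2 V H"
  have len: "length as = length ?L1" "length (reorder ?L1 ?L2 as) = length ?L2"
    using length_comp_list_gen_ok[OF finite lin1 lin2 x(2)] by simp_all
  have "reorder ?L2 ?L1 (reorder ?L1 ?L2 as) = as"
    using reorder_reorder comp_lists[OF finite lin1 lin2] len(1) by blast
  then show "change_order le2 le1 V (change_order le1 le2 V (delta x)) = delta x"
    unfolding x change_order_delta[OF finite lin1 lin2 len(1)] change_order_smult
      change_order_delta[OF finite lin2 lin1 len(2)]
    by (simp add: mult.assoc[symmetric] reorder_sign_swap)
qed

context
  fixes V :: "'v set" and E :: "('v \<times> 'v) set" and le1 le2 :: "'v rel"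
  assumes digraph: "digraph V E"
    and lin1: "linear_order_on V le1" and lin2: "linear_order_on V le2"
begin

lemma change_order_dfree_delta:
  assumes gen: "gen_ok V E n (H, as)"
  shows "change_order le1 le2 V (dfree le1 V E (delta (H, as))) =
    dfree le2 V E (change_order le1 le2 V (delta (H, as)))"
proof -
  let ?valid = "\<lambda>e. e \<notin> H \<and> is_multipath V E (insert e H)"
  let ?L1 = "comp_list le1 V H" and ?L2 = "comp_list le2 V H"
  have finite: "finite V" and E: "finite E"
    using digraph digraph_finite_edges by (auto simp: digraph_def)
  have len: "length as = length ?L1"
    using length_comp_list_gen_ok[OF finite lin1 lin2 gen] .
  have summand: "(if ?valid e then edge_sign le1 V H e else 0) *
      change_order le1 le2 V (delta (insert e H, edge_map le1 V H e as)) y =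
    reorder_sign le1 le2 V H * (if ?valid e
      then edge_sign le2 V H e * delta (insert e H, edge_map le2 V H e (reorder ?L1 ?L2 as)) y
      else 0)" if "e \<in> E" for e y
  proof (cases "?valid e")
    case True
    then interpret edge_addition V E H "fst e" "snd e"
      using edge_additionI[OF digraph _ that] gen by (simp add: gen_ok_def)
    have "length (edge_map le1 V H e as) = length (comp_list le1 V (insert e H))"
      using gen_ok_insert_edge[OF lin1 gen] length_comp_list[OF finite lin1] by (simp add:
        gen_ok_def)
    then show ?thesis
      using True reorder_edge_map[OF lin1 lin2 len]
      by (simp add: change_order_delta[OF finite lin1 lin2]
          reorder_sign_edge_sign[OF lin1 lin2, unfolded prod.collapse] flip: mult.assoc)
  next
    case False
    then show ?thesis
      by (simp only: if_not_P[OF False] if_False mult_zero_left mult_zero_right)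
  qed
  have dfree1: "dfree le1 V E (delta (H, as)) =
      (\<lambda>y. \<Sum>e\<in>E. (if ?valid e then edge_sign le1 V H e else 0) * delta (insert e H, edge_map le1 V
        H e as) y)"
    unfolding dfree_delta[OF E] by (intro ext sum.cong) simp_all
  have "change_order le1 le2 V (dfree le1 V E (delta (H, as))) = (\<lambda>y. \<Sum>e\<in>E.
      (if ?valid e then edge_sign le1 V H e else 0) *
      change_order le1 le2 V (delta (insert e H, edge_map le1 V H e as)) y)"
    unfolding dfree1 by (rule change_order_sum)
  also have "\<dots> = (\<lambda>y. reorder_sign le1 le2 V H * (\<Sum>e\<in>E. if ?valid e
      then edge_sign le2 V H e * delta (insert e H, edge_map le2 V H e (reorder ?L1 ?L2 as)) y
        else 0))"
    unfolding sum_distrib_left by (intro ext sum.cong refl) (rule summand)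
  also have "\<dots> = dfree le2 V E (change_order le1 le2 V (delta (H, as)))"
    by (simp add: change_order_delta[OF finite lin1 lin2 len] dfree_delta[OF E]
        finsupp_linear_smult[OF finsupp_linear_dfree[OF E] finite_support_delta])
  finally show ?thesis .
qed

lemma change_order_dfree:
  assumes "f \<in> Fr V E n"
  shows "change_order le1 le2 V (dfree le1 V E f) = dfree le2 V E (change_order le1 le2 V f)"
proof (rule finsupp_linear_eq_on_Fr[OF _ _ _ assms])
  have finite: "finite V" and E: "finite E"
    using digraph digraph_finite_edges by (auto simp: digraph_def)
  show "finsupp_linear (\<lambda>f. change_order le1 le2 V (dfree le1 V E f))"
    by (rule finsupp_linear_comp[OF finsupp_linear_dfree[OF E] finsupp_linear_change_order
          finite_support_dfree[OF E]])
  show "finsupp_linear (\<lambda>f. dfree le2 V E (change_order le1 le2 V f))"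
    by (rule finsupp_linear_comp[OF finsupp_linear_change_order finsupp_linear_dfree[OF E]
          finite_support_change_order[OF finite lin1 lin2]])
qed (auto intro: change_order_dfree_delta)

end


lemma cls_eqI:
  assumes "(\<lambda>y. f y - g y) \<in> Nrel sm V E n"
  shows "cls sm V E n f = cls sm V E n g"
proof -
  have "(\<lambda>y. f y - h y) \<in> Nrel sm V E n \<longleftrightarrow> (\<lambda>y. g y - h y) \<in> Nrel sm V E n" for h
    using Nrel_diff[OF _ assms, of "\<lambda>y. f y - h y"] Nrel.add[OF assms, of "\<lambda>y. g y - h y"] by auto
  then show ?thesis
    by (simp add: cls_def)
qed

lemma rep_cls:
  assumes "f \<in> Fr V E n"
  shows "rep (cls sm V E n f) \<in> Fr V E n" "(\<lambda>y. f y - rep (cls sm V E n f) y) \<in> Nrel sm V E n"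
proof -
  have "f \<in> cls sm V E n f"
    using assms Nrel.zero by (simp add: cls_def)
  then have "rep (cls sm V E n f) \<in> cls sm V E n f"
    unfolding rep_def by (rule someI[where P = "\<lambda>g. g \<in> cls sm V E n f"])
  then show "rep (cls sm V E n f) \<in> Fr V E n" "(\<lambda>y. f y - rep (cls sm V E n f) y) \<in> Nrel sm V E n"
    by (simp_all add: cls_def)
qed

lemma qadd_cls:
  assumes "f \<in> Fr V E n" "g \<in> Fr V E n"
  shows "qadd sm V E n (cls sm V E n f) (cls sm V E n g) = cls sm V E n (\<lambda>y. f y + g y)"
  unfolding qadd_def
  using Nrel.add[OF rep_cls(2)[OF assms(1)] rep_cls(2)[OF assms(2)]]
  by (intro cls_eqI[symmetric]) (simp add: algebra_simps)

lemma qsmult_cls: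
  assumes "f \<in> Fr V E n"
  shows "qsmult sm V E n r (cls sm V E n f) = cls sm V E n (\<lambda>y. r * f y)"
  unfolding qsmult_def
  using Nrel.smult[OF rep_cls(2)[OF assms], where r = r]
  by (intro cls_eqI[symmetric]) (simp add: algebra_simps)

lemma qd_cls:
  assumes "digraph V E" "linear_order_on V le" "is_algebra sm" "f \<in> Fr V E n"
  shows "qd sm le V E n (cls sm V E n f) = cls sm V E (Suc n) (dfree le V E f)"
  unfolding qd_def
proof (rule cls_eqI)
  have "dfree le V E (\<lambda>y. f y - rep (cls sm V E n f) y) \<in> Nrel sm V E (Suc n)"
    using dfree_Nrel[OF assms(1-3) rep_cls(2)[OF assms(4)]] .
  then show "(\<lambda>y. dfree le V E (rep (cls sm V E n f)) y - dfree le V E f y) \<in> Nrel sm V E (Suc n)"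
    using Nrel.smult[of _ sm V E "Suc n" "- 1"]
      finsupp_linear_diff[OF finsupp_linear_dfree[OF digraph_finite_edges[OF assms(1)]]
        Fr_finite_support[OF assms(4)] Fr_finite_support[OF rep_cls(1)[OF assms(4)]]]
    by fastforce
qed

lemma change_order_cls:
  assumes "finite V" "linear_order_on V le1" "linear_order_on V le2" and f: "f \<in> Fr V E n"
  shows "change_order le1 le2 V ` cls sm V E n f = cls sm V E n (change_order le1 le2 V f)"
proof
  show "change_order le1 le2 V ` cls sm V E n f \<subseteq> cls sm V E n (change_order le1 le2 V f)"
  proof clarify
    fix g assume "g \<in> cls sm V E n f"
    then have g: "g \<in> Fr V E n" "(\<lambda>y. f y - g y) \<in> Nrel sm V E n"
      by (simp_all add: cls_def)
    then show "change_order le1 le2 V g \<in> cls sm V E n (change_order le1 le2 V f)"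
      using change_order_Fr[OF assms(1-3) g(1)] change_order_Nrel[OF assms(1-3) g(2)]
      by (simp add: cls_def change_order_diff)
  qed
  show "cls sm V E n (change_order le1 le2 V f) \<subseteq> change_order le1 le2 V ` cls sm V E n f"
  proof
    fix h assume "h \<in> cls sm V E n (change_order le1 le2 V f)"
    then have h: "h \<in> Fr V E n" "(\<lambda>y. change_order le1 le2 V f y - h y) \<in> Nrel sm V E n"
      by (simp_all add: cls_def)
    then have "change_order le2 le1 V h \<in> cls sm V E n f"
      using change_order_Fr[OF assms(1,3,2) h(1)] change_order_Nrel[OF assms(1,3,2) h(2)]
        change_order_inverse[OF assms(1-3) f]
      by (simp add: cls_def change_order_diff)
    moreover have "h = change_order le1 le2 V (change_order le2 le1 V h)"
      using change_order_inverse[OF assms(1,3,2) h(1)] by simp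
    ultimately show "h \<in> change_order le1 le2 V ` cls sm V E n f"
      by blast
  qed
qed

lemma CqE:
  assumes "X \<in> Cq sm V E n"
  obtains f where "f \<in> Fr V E n" "X = cls sm V E n f"
  using assms unfolding Cq_def by blast

context
  fixes V :: "'v set" and le1 le2 :: "'v rel"
  assumes finite: "finite V" and lin1: "linear_order_on V le1" and lin2: "linear_order_on V le2"
begin

lemma change_order_image_Cq: "X \<in> Cq sm V E n \<Longrightarrow> change_order le1 le2 V ` X \<in> Cq sm V E n"
  by (erule CqE) (simp add: Cq_def change_order_cls[OF finite lin1 lin2] change_order_Fr[OF finite
    lin1 lin2])

lemma change_order_image_inverse:
  assumes "X \<in> Cq sm V E n"
  shows "change_order le2 le1 V ` change_order le1 le2 V ` X = X"
proof -
  obtain f where "f \<in> Fr V E n" "X = cls sm V E n f"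
    using assms by (rule CqE)
  then have "X \<subseteq> Fr V E n"
    by (auto simp: cls_def)
  then show ?thesis
    using change_order_inverse[OF finite lin1 lin2] by (force simp: image_image)
qed

lemma change_order_qadd:
  assumes "X \<in> Cq sm V E n" "Y \<in> Cq sm V E n"
  shows "change_order le1 le2 V ` qadd sm V E n X Y =
    qadd sm V E n (change_order le1 le2 V ` X) (change_order le1 le2 V ` Y)"
proof -
  obtain f g where f: "f \<in> Fr V E n" "X = cls sm V E n f" and g: "g \<in> Fr V E n" "Y = cls sm V E n g"
    using assms by (meson CqE)
  have "change_order le1 le2 V ` qadd sm V E n X Y =
      cls sm V E n (change_order le1 le2 V (\<lambda>y. f y + g y))"
    using change_order_cls[OF finite lin1 lin2 Fr_add[OF f(1) g(1)]] by (simp add: f g qadd_cls)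
  also have "\<dots> = qadd sm V E n (cls sm V E n (change_order le1 le2 V f))
      (cls sm V E n (change_order le1 le2 V g))"
    using qadd_cls[OF change_order_Fr[OF finite lin1 lin2 f(1)] change_order_Fr[OF finite lin1
      lin2 g(1)]]
    by (simp add: change_order_add)
  finally show ?thesis
    unfolding f(2) g(2) change_order_cls[OF finite lin1 lin2 f(1)]
      change_order_cls[OF finite lin1 lin2 g(1)] .
qed

lemma change_order_qsmult:
  assumes "X \<in> Cq sm V E n"
  shows "change_order le1 le2 V ` qsmult sm V E n r X = qsmult sm V E n r (change_order le1 le2 V
    ` X)"
proof -
  obtain f where f: "f \<in> Fr V E n" "X = cls sm V E n f"
    using assms by (rule CqE)
  have "change_order le1 le2 V ` qsmult sm V E n r X = cls sm V E n (change_order le1 le2 V (\<lambda>y. r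
    * f y))"
    using change_order_cls[OF finite lin1 lin2 Fr_smult[OF f(1)]] by (simp add: f qsmult_cls)
  also have "\<dots> = qsmult sm V E n r (cls sm V E n (change_order le1 le2 V f))"
    using qsmult_cls[OF change_order_Fr[OF finite lin1 lin2 f(1)]] by (simp add: change_order_smult)
  finally show ?thesis
    unfolding f(2) change_order_cls[OF finite lin1 lin2 f(1)] .
qed

end

lemma bij_betw_change_order:
  assumes "finite V" "linear_order_on V le1" "linear_order_on V le2"
  shows "bij_betw ((`) (change_order le1 le2 V)) (Cq sm V E n) (Cq sm V E n)"
proof (rule bij_betw_byWitness[where f' = "(`) (change_order le2 le1 V)"])
  show "\<forall>X\<in>Cq sm V E n. change_order le2 le1 V ` change_order le1 le2 V ` X = X"
    by (intro ballI change_order_image_inverse[OF assms])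
  show "\<forall>X\<in>Cq sm V E n. change_order le1 le2 V ` change_order le2 le1 V ` X = X"
    by (intro ballI change_order_image_inverse[OF assms(1,3,2)])
  show "(`) (change_order le1 le2 V) ` Cq sm V E n \<subseteq> Cq sm V E n"
    by (intro image_subsetI change_order_image_Cq[OF assms])
  show "(`) (change_order le2 le1 V) ` Cq sm V E n \<subseteq> Cq sm V E n"
    by (intro image_subsetI change_order_image_Cq[OF assms(1,3,2)])
qed

lemma change_order_qd:
  assumes digraph: "digraph V E" and alg: "is_algebra sm"
    and lin1: "linear_order_on V le1" and lin2: "linear_order_on V le2" and X: "X \<in> Cq sm V E n"
  shows "change_order le1 le2 V ` qd sm le1 V E n X = qd sm le2 V E n (change_order le1 le2 V ` X)"
proof -
  have finite: "finite V"
    using digraph by (simp add: digraph_def)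
  obtain f where f: "f \<in> Fr V E n" "X = cls sm V E n f"
    using X by (rule CqE)
  have "change_order le1 le2 V ` qd sm le1 V E n X =
      cls sm V E (Suc n) (change_order le1 le2 V (dfree le1 V E f))"
    using change_order_cls[OF finite lin1 lin2 dfree_Fr[OF digraph lin1 f(1)]]
    by (simp add: f qd_cls[OF digraph lin1 alg])
  also have "\<dots> = qd sm le2 V E n (cls sm V E n (change_order le1 le2 V f))"
    using qd_cls[OF digraph lin2 alg change_order_Fr[OF finite lin1 lin2 f(1)]]
    by (simp add: change_order_dfree[OF digraph lin1 lin2 f(1)])
  finally show ?thesis
    unfolding f(2) change_order_cls[OF finite lin1 lin2 f(1)] .
qed

theorem proposition4p11:
  fixes V :: "'v set" and E :: "('v \<times> 'v) set"
    and sm :: "'r::{comm_ring,monoid_mult} \<Rightarrow> 'a::{ring,monoid_mult} \<Rightarrow> 'a"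
    and le1 le2 :: "'v rel"
  assumes "digraph V E"
    and "is_algebra sm"
    and "linear_order_on V le1"
    and "linear_order_on V le2"
  shows "cochain_iso sm V E le1 le2"
proof -
  have finite: "finite V"
    using assms(1) by (simp add: digraph_def)
  show ?thesis
    unfolding cochain_iso_def
    by (intro exI[of _ "\<lambda>n. (`) (change_order le1 le2 V)"] allI conjI ballI
        bij_betw_change_order[OF finite assms(3,4)] change_order_qadd[OF finite assms(3,4)]
        change_order_qsmult[OF finite assms(3,4)] change_order_qd[OF assms])
qed


end
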